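(* Let $\mathcal H$ be a graded connected Hopf algebra over a field $\Bbbk$ and $\varphi,\psi\colon\mathcal H\to\Bbbk$ characters. Then: (a) $S(\varphi,\psi)=\{h\in\mathcal H : f(h)=0\ \text{for all } f\in I(\varphi,\psi)\}$; (b) $I(\varphi,\psi)$ is a graded Hopf ideal of $\mathcal H^*$; (c) $S(\varphi,\psi)$ is a graded Hopf subalgebra of $\mathcal H$; (d) a homogeneous element $h\in\mathcal H$ belongs to $S(\varphi,\psi)$ if and only if $\bigl(\mathrm{id}\otimes(\varphi-\psi)\otimes\mathrm{id}\bigr)\circ\Delta^{(2)}(h)=0$.
   Context: $\mathcal H=\bigoplus_{n\ge0}\mathcal H_n$ is graded connected ($\mathcal H_0=\Bbbk\cdot1$, graded structure maps) with each $\mathcal H_n$ finite-dimensional; $\Delta^{(2)}=(\Delta\otimes\mathrm{id})\circ\Delta$. $\mathcal H^*=\bigoplus_n(\mathcal H_n)^*$ is the graded dual Hopf algebra (product = convolution). For a linear functional $\varphi$, $\varphi_n=\varphi|_{\mathcal H_n}\in(\mathcal H_n)^*$. A character is an algebra morphism $\mathcal H\to\Bbbk$. $S(\varphi,\psi)$ denotes the largest graded subcoalgebra of $\mathcal H$ on which $\varphi(h)=\psi(h)$ for all $h$, and $I(\varphi,\psi)$ denotes the ideal of $\mathcal H^*$ generated by the elements $\varphi_n-\psi_n$, $n\ge0$. *)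

theory Defs
  imports Main "HOL-Library.Function_Algebras"
begin

text \<open>Coordinate model of a graded connected Hopf algebra over a field 'k.
  H has a homogeneous basis indexed by type 'b, with degree map deg, finitely many
  basis elements in each degree, and the unit 1 is the basis element u spanning H_0.
  Elements of H are finitely supported coefficient functions 'b => 'k; elements of
  H (x) H are finitely supported functions 'b * 'b => 'k.
  Structure constants: b*c = sum_d M b c d d;  Delta b = sum_{c,d} D b c d (c (x) d);
  counit eps; antipode S b = sum_d A b d d.
  A linear functional on H is given by its values on the basis ('b => 'k); the graded
  dual H* = (+)_n (H_n)^* consists of the finitely supported ones.\<close>

definition supp :: "('a \<Rightarrow> 'k::zero) \<Rightarrow> 'a set" where
  "supp v = {b. v b \<noteq> 0}"

definition dset :: "('b \<Rightarrow> nat) \<Rightarrow> nat \<Rightarrow> 'b set" where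
  "dset deg n = {b. deg b = n}"

definition lowset :: "('b \<Rightarrow> nat) \<Rightarrow> nat \<Rightarrow> 'b set" where
  "lowset deg n = {b. deg b \<le> n}"

definition graded_connected_hopf ::
  "('b \<Rightarrow> nat) \<Rightarrow> 'b \<Rightarrow> ('b \<Rightarrow> 'b \<Rightarrow> 'b \<Rightarrow> 'k::field) \<Rightarrow> ('b \<Rightarrow> 'b \<Rightarrow> 'b \<Rightarrow> 'k)
   \<Rightarrow> ('b \<Rightarrow> 'k) \<Rightarrow> ('b \<Rightarrow> 'b \<Rightarrow> 'k) \<Rightarrow> bool" where
  "graded_connected_hopf deg u M D eps A \<longleftrightarrow>
     (\<forall>n. finite (dset deg n)) \<and> dset deg 0 = {u} \<and>
     \<comment> \<open>grading of the structure maps\<close>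
     (\<forall>b c d. M b c d \<noteq> 0 \<longrightarrow> deg d = deg b + deg c) \<and>
     (\<forall>b c d. D b c d \<noteq> 0 \<longrightarrow> deg c + deg d = deg b) \<and>
     (\<forall>b d. A b d \<noteq> 0 \<longrightarrow> deg d = deg b) \<and>
     \<comment> \<open>associativity and unit\<close>
     (\<forall>b c d f. (\<Sum>e\<in>dset deg (deg b + deg c). M b c e * M e d f)
                = (\<Sum>e\<in>dset deg (deg c + deg d). M c d e * M b e f)) \<and>
     (\<forall>b d. M u b d = (if d = b then 1 else 0) \<and> M b u d = (if d = b then 1 else 0)) \<and>
     \<comment> \<open>coassociativity and counit\<close>
     (\<forall>b c d f. (\<Sum>e\<in>dset deg (deg c + deg d). D b e f * D e c d)
                = (\<Sum>e\<in>dset deg (deg d + deg f). D b c e * D e d f)) \<and>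
     (\<forall>b d. (\<Sum>c\<in>lowset deg (deg b). eps c * D b c d) = (if d = b then 1 else 0) \<and>
            (\<Sum>c\<in>lowset deg (deg b). D b d c * eps c) = (if d = b then 1 else 0)) \<and>
     \<comment> \<open>bialgebra compatibility\<close>
     (\<forall>b c p q. (\<Sum>e\<in>dset deg (deg b + deg c). M b c e * D e p q)
        = (\<Sum>b1\<in>lowset deg (deg b). \<Sum>b2\<in>lowset deg (deg b).
           \<Sum>c1\<in>lowset deg (deg c). \<Sum>c2\<in>lowset deg (deg c).
             D b b1 b2 * D c c1 c2 * M b1 c1 p * M b2 c2 q)) \<and>
     (\<forall>b c. (\<Sum>e\<in>dset deg (deg b + deg c). M b c e * eps e) = eps b * eps c) \<and>
     (\<forall>p q. D u p q = (if p = u \<and> q = u then 1 else 0)) \<and> eps u = 1 \<and>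
     \<comment> \<open>antipode\<close>
     (\<forall>b f. (\<Sum>c\<in>lowset deg (deg b). \<Sum>d\<in>lowset deg (deg b). \<Sum>e\<in>dset deg (deg c).
                 D b c d * A c e * M e d f) = eps b * (if f = u then 1 else 0) \<and>
            (\<Sum>c\<in>lowset deg (deg b). \<Sum>d\<in>lowset deg (deg b). \<Sum>e\<in>dset deg (deg d).
                 D b c d * A d e * M c e f) = eps b * (if f = u then 1 else 0))"

definition Hset :: "('a \<Rightarrow> 'k::zero) set" where
  "Hset = {h. finite (supp h)}"

definition subsp :: "('a \<Rightarrow> 'k::field) set \<Rightarrow> bool" where
  "subsp V \<longleftrightarrow> 0 \<in> V \<and> (\<forall>x\<in>V. \<forall>y\<in>V. x + y \<in> V) \<and> (\<forall>c x. x \<in> V \<longrightarrow> (\<lambda>p. c * x p) \<in> V)"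

definition lspan :: "('a \<Rightarrow> 'k::field) set \<Rightarrow> ('a \<Rightarrow> 'k) set" where
  "lspan X = {v. \<exists>F c. finite F \<and> F \<subseteq> X \<and> v = (\<Sum>x\<in>F. (\<lambda>p. c x * x p))}"

definition tprod :: "('b \<Rightarrow> 'k::field) \<Rightarrow> ('b \<Rightarrow> 'k) \<Rightarrow> ('b \<times> 'b \<Rightarrow> 'k)" where
  "tprod x y = (\<lambda>(p, q). x p * y q)"

definition tspan :: "('b \<Rightarrow> 'k::field) set \<Rightarrow> ('b \<Rightarrow> 'k) set \<Rightarrow> ('b \<times> 'b \<Rightarrow> 'k) set" where
  "tspan V W = lspan {tprod x y | x y. x \<in> V \<and> y \<in> W}"

definition comp :: "('b \<Rightarrow> nat) \<Rightarrow> nat \<Rightarrow> ('b \<Rightarrow> 'k::zero) \<Rightarrow> ('b \<Rightarrow> 'k)" where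
  "comp deg n x = (\<lambda>b. if deg b = n then x b else 0)"

definition graded_subsp :: "('b \<Rightarrow> nat) \<Rightarrow> ('b \<Rightarrow> 'k::zero) set \<Rightarrow> bool" where
  "graded_subsp deg V \<longleftrightarrow> (\<forall>x\<in>V. \<forall>n. comp deg n x \<in> V)"

definition homogeneous :: "('b \<Rightarrow> nat) \<Rightarrow> ('b \<Rightarrow> 'k::zero) \<Rightarrow> bool" where
  "homogeneous deg h \<longleftrightarrow> (\<exists>n. \<forall>b. h b \<noteq> 0 \<longrightarrow> deg b = n)"

definition hmult :: "('b \<Rightarrow> 'b \<Rightarrow> 'b \<Rightarrow> 'k::field) \<Rightarrow> ('b \<Rightarrow> 'k) \<Rightarrow> ('b \<Rightarrow> 'k) \<Rightarrow> ('b \<Rightarrow> 'k)" where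
  "hmult M x y = (\<lambda>d. \<Sum>b\<in>supp x. \<Sum>c\<in>supp y. x b * y c * M b c d)"

definition hcomult :: "('b \<Rightarrow> 'b \<Rightarrow> 'b \<Rightarrow> 'k::field) \<Rightarrow> ('b \<Rightarrow> 'k) \<Rightarrow> ('b \<times> 'b \<Rightarrow> 'k)" where
  "hcomult D x = (\<lambda>(p, q). \<Sum>b\<in>supp x. x b * D b p q)"

definition hantip :: "('b \<Rightarrow> 'b \<Rightarrow> 'k::field) \<Rightarrow> ('b \<Rightarrow> 'k) \<Rightarrow> ('b \<Rightarrow> 'k)" where
  "hantip A x = (\<lambda>d. \<Sum>b\<in>supp x. x b * A b d)"

definition unitv :: "'b \<Rightarrow> ('b \<Rightarrow> 'k::field)" where
  "unitv u = (\<lambda>b. if b = u then 1 else 0)"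

definition pair :: "('b \<Rightarrow> 'k::field) \<Rightarrow> ('b \<Rightarrow> 'k) \<Rightarrow> 'k" where
  "pair f h = (\<Sum>b\<in>supp h. f b * h b)"

definition character :: "('b \<Rightarrow> nat) \<Rightarrow> 'b \<Rightarrow> ('b \<Rightarrow> 'b \<Rightarrow> 'b \<Rightarrow> 'k::field) \<Rightarrow> ('b \<Rightarrow> 'k) \<Rightarrow> bool" where
  "character deg u M phi \<longleftrightarrow> phi u = 1 \<and>
     (\<forall>b c. phi b * phi c = (\<Sum>e\<in>dset deg (deg b + deg c). M b c e * phi e))"

definition graded_subcoalg :: "('b \<Rightarrow> nat) \<Rightarrow> ('b \<Rightarrow> 'b \<Rightarrow> 'b \<Rightarrow> 'k::field) \<Rightarrow> ('b \<Rightarrow> 'k) set \<Rightarrow> bool" where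
  "graded_subcoalg deg D C \<longleftrightarrow> C \<subseteq> Hset \<and> subsp C \<and> graded_subsp deg C \<and>
     (\<forall>x\<in>C. hcomult D x \<in> tspan C C)"

definition Sset :: "('b \<Rightarrow> nat) \<Rightarrow> ('b \<Rightarrow> 'b \<Rightarrow> 'b \<Rightarrow> 'k::field) \<Rightarrow> ('b \<Rightarrow> 'k) \<Rightarrow> ('b \<Rightarrow> 'k) \<Rightarrow> ('b \<Rightarrow> 'k) set" where
  "Sset deg D phi psi = (GREATEST C. graded_subcoalg deg D C \<and> (\<forall>h\<in>C. pair phi h = pair psi h))"

text \<open>The graded dual H*: convolution product, coproduct (dual of M), antipode, counit f |-> f u.\<close>
definition conv :: "('b \<Rightarrow> nat) \<Rightarrow> ('b \<Rightarrow> 'b \<Rightarrow> 'b \<Rightarrow> 'k::field) \<Rightarrow> ('b \<Rightarrow> 'k) \<Rightarrow> ('b \<Rightarrow> 'k) \<Rightarrow> ('b \<Rightarrow> 'k)" where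
  "conv deg D f g = (\<lambda>b. \<Sum>c\<in>lowset deg (deg b). \<Sum>d\<in>lowset deg (deg b). D b c d * f c * g d)"

definition dual_comult :: "('b \<Rightarrow> nat) \<Rightarrow> ('b \<Rightarrow> 'b \<Rightarrow> 'b \<Rightarrow> 'k::field) \<Rightarrow> ('b \<Rightarrow> 'k) \<Rightarrow> ('b \<times> 'b \<Rightarrow> 'k)" where
  "dual_comult deg M f = (\<lambda>(b, c). \<Sum>e\<in>dset deg (deg b + deg c). M b c e * f e)"

definition dual_antip :: "('b \<Rightarrow> nat) \<Rightarrow> ('b \<Rightarrow> 'b \<Rightarrow> 'k::field) \<Rightarrow> ('b \<Rightarrow> 'k) \<Rightarrow> ('b \<Rightarrow> 'k)" where
  "dual_antip deg A f = (\<lambda>b. \<Sum>d\<in>dset deg (deg b). A b d * f d)"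

definition dual_ideal :: "('b \<Rightarrow> nat) \<Rightarrow> ('b \<Rightarrow> 'b \<Rightarrow> 'b \<Rightarrow> 'k::field) \<Rightarrow> ('b \<Rightarrow> 'k) set \<Rightarrow> bool" where
  "dual_ideal deg D I \<longleftrightarrow> I \<subseteq> Hset \<and> subsp I \<and>
     (\<forall>f\<in>I. \<forall>g\<in>Hset. conv deg D f g \<in> I \<and> conv deg D g f \<in> I)"

definition Iset :: "('b \<Rightarrow> nat) \<Rightarrow> ('b \<Rightarrow> 'b \<Rightarrow> 'b \<Rightarrow> 'k::field) \<Rightarrow> ('b \<Rightarrow> 'k) \<Rightarrow> ('b \<Rightarrow> 'k) \<Rightarrow> ('b \<Rightarrow> 'k) set" where
  "Iset deg D phi psi = \<Inter>{I. dual_ideal deg D I \<and> (\<forall>n. comp deg n phi - comp deg n psi \<in> I)}"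

definition graded_hopf_ideal_dual ::
  "('b \<Rightarrow> nat) \<Rightarrow> 'b \<Rightarrow> ('b \<Rightarrow> 'b \<Rightarrow> 'b \<Rightarrow> 'k::field) \<Rightarrow> ('b \<Rightarrow> 'b \<Rightarrow> 'b \<Rightarrow> 'k) \<Rightarrow> ('b \<Rightarrow> 'b \<Rightarrow> 'k)
   \<Rightarrow> ('b \<Rightarrow> 'k) set \<Rightarrow> bool" where
  "graded_hopf_ideal_dual deg u M D A I \<longleftrightarrow> dual_ideal deg D I \<and> graded_subsp deg I \<and>
     (\<forall>f\<in>I. dual_comult deg M f \<in>
        lspan ({tprod x y | x y. x \<in> I \<and> y \<in> Hset} \<union> {tprod x y | x y. x \<in> Hset \<and> y \<in> I})) \<and>
     (\<forall>f\<in>I. f u = 0) \<and>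
     (\<forall>f\<in>I. dual_antip deg A f \<in> I)"

definition graded_hopf_subalg ::
  "('b \<Rightarrow> nat) \<Rightarrow> 'b \<Rightarrow> ('b \<Rightarrow> 'b \<Rightarrow> 'b \<Rightarrow> 'k::field) \<Rightarrow> ('b \<Rightarrow> 'b \<Rightarrow> 'b \<Rightarrow> 'k) \<Rightarrow> ('b \<Rightarrow> 'b \<Rightarrow> 'k)
   \<Rightarrow> ('b \<Rightarrow> 'k) set \<Rightarrow> bool" where
  "graded_hopf_subalg deg u M D A C \<longleftrightarrow> C \<subseteq> Hset \<and> subsp C \<and> graded_subsp deg C \<and>
     unitv u \<in> C \<and> (\<forall>x\<in>C. \<forall>y\<in>C. hmult M x y \<in> C) \<and>
     (\<forall>x\<in>C. hcomult D x \<in> tspan C C) \<and> (\<forall>x\<in>C. hantip A x \<in> C)"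

text \<open>(id (x) chi (x) id) o Delta^(2) applied to h, as an element of H (x) H.\<close>
definition delta2_mid :: "('b \<Rightarrow> nat) \<Rightarrow> ('b \<Rightarrow> 'b \<Rightarrow> 'b \<Rightarrow> 'k::field) \<Rightarrow> ('b \<Rightarrow> 'k) \<Rightarrow> ('b \<Rightarrow> 'k) \<Rightarrow> ('b \<times> 'b \<Rightarrow> 'k)" where
  "delta2_mid deg D chi h = (\<lambda>(p, q). \<Sum>b\<in>supp h. h b *
     (\<Sum>e\<in>lowset deg (deg b). \<Sum>c\<in>lowset deg (deg b). D b e q * D e p c * chi c))"

end

theory Submission
  imports Defs
begin

text \<open>Let \<open>I\<close> be the ideal of \<open>H\<^sup>*\<close> generated by the \<open>\<phi>\<^sub>n - \<psi>\<^sub>n\<close> and \<open>I\<^sup>\<bottom>\<close> its annihilator in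
  \<open>H\<close>. Since \<open>\<langle>f * g, h\<rangle> = \<langle>f \<otimes> g, \<Delta> h\<rangle>\<close> and the generators are homogeneous, \<open>I\<^sup>\<bottom>\<close> is a
  graded subcoalgebra, and \<open>\<phi> = \<psi>\<close> on it because \<open>\<phi> - \<psi>\<close> agrees with a finite sum of
  generators on each element. Conversely, for a graded subcoalgebra \<open>C\<close> on which \<open>\<phi> = \<psi>\<close>, the
  annihilator of \<open>C\<close> in \<open>H\<^sup>*\<close> is an ideal containing the generators, so \<open>C \<subseteq> I\<^sup>\<bottom>\<close>; this is (a).
  Characters are group-like in \<open>H\<^sup>*\<close>, so \<open>\<Delta>\<^sup>*\<close> maps the generators into
  \<open>I \<otimes> H\<^sup>* + H\<^sup>* \<otimes> I\<close>, and as \<open>\<Delta>\<^sup>*\<close> is multiplicative the same holds on all of \<open>I\<close>. The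
  generators vanish at \<open>1\<close>, and \<open>S\<^sup>*(I) \<subseteq> I\<close> follows by induction on the degree from
  \<open>m (S\<^sup>* \<otimes> id) \<Delta>\<^sup>* = \<epsilon>\<close>; this is (b), and dualising gives (c). For (d), with \<open>e\<^sub>p\<close> the dual
  basis vectors, \<open>\<langle>e\<^sub>p * (\<phi>\<^sub>n - \<psi>\<^sub>n) * e\<^sub>q, h\<rangle>\<close> is the \<open>(p, q)\<close> coefficient of
  \<open>(id \<otimes> (\<phi> - \<psi>) \<otimes> id) \<Delta>\<^sup>(\<^sup>2\<^sup>) h\<close> for \<open>h\<close> homogeneous of degree \<open>n + deg p + deg q\<close>, and
  the products \<open>a * (\<phi>\<^sub>n - \<psi>\<^sub>n) * b\<close> span \<open>I\<close>.\<close>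

section \<open>Finitely supported vectors, pairing and tensors\<close>

lemma sum_fun_apply: "(sum f A) x = (\<Sum>a\<in>A. f a x)"
  by (induction A rule: infinite_finite_induct) auto

lemma sum_eq_single:
  assumes "finite S" "a \<in> S" "\<And>x. x \<in> S \<Longrightarrow> x \<noteq> a \<Longrightarrow> f x = 0"
  shows "sum f S = f a"
  using assms by (simp add: sum.remove sum.neutral)

lemma sum_rotate3:
  "(\<Sum>e\<in>E. \<Sum>c\<in>C. \<Sum>d\<in>Dd. F c d e) = (\<Sum>c\<in>C. \<Sum>d\<in>Dd. \<Sum>e\<in>E. F c d e)"
  by (subst sum.swap, rule sum.cong[OF refl], rule sum.swap)

lemma subsp_zero: "subsp V \<Longrightarrow> 0 \<in> V"
  by (simp add: subsp_def)

lemma subsp_add: "subsp V \<Longrightarrow> x \<in> V \<Longrightarrow> y \<in> V \<Longrightarrow> x + y \<in> V"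
  by (simp add: subsp_def)

lemma subsp_scale: "subsp V \<Longrightarrow> x \<in> V \<Longrightarrow> (\<lambda>p. c * x p) \<in> V"
  by (simp add: subsp_def)

lemma subsp_uminus: "subsp V \<Longrightarrow> x \<in> V \<Longrightarrow> - x \<in> V"
  using subsp_scale[of V x "- 1"] by (simp add: fun_Compl_def)

lemma subsp_diff: "subsp V \<Longrightarrow> x \<in> V \<Longrightarrow> y \<in> V \<Longrightarrow> x - y \<in> V"
  using subsp_add[of V x "- y"] subsp_uminus[of V y] by simp

lemma subsp_sum: "subsp V \<Longrightarrow> (\<And>i. i \<in> F \<Longrightarrow> g i \<in> V) \<Longrightarrow> sum g F \<in> V"
  by (induction F rule: infinite_finite_induct) (auto simp: subsp_zero subsp_add)

lemma subsp_Hset: "subsp Hset"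
proof -
  have "supp (x + y) \<subseteq> supp x \<union> supp y" "supp (\<lambda>p. c * x p) \<subseteq> supp x"
    for x y :: "'a \<Rightarrow> 'k::field" and c
    by (auto simp: supp_def)
  then show ?thesis
    unfolding subsp_def Hset_def by (auto simp: supp_def intro: finite_subset)
qed

lemma zero_Hset [simp]: "0 \<in> Hset"
  by (simp add: Hset_def supp_def)

definition linear_fun :: "(('a \<Rightarrow> 'k::field) \<Rightarrow> ('c \<Rightarrow> 'k)) \<Rightarrow> bool" where
  "linear_fun F \<longleftrightarrow>
     (\<forall>x y. F (x + y) = F x + F y) \<and> (\<forall>c x. F (\<lambda>p. c * x p) = (\<lambda>p. c * F x p))"

lemma linear_funI:
  assumes "\<And>x y. F (x + y) = F x + F y" "\<And>c x. F (\<lambda>p. c * x p) = (\<lambda>p. c * F x p)"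
  shows "linear_fun F"
  using assms by (simp add: linear_fun_def)

lemma linear_fun_add: "linear_fun F \<Longrightarrow> F (x + y) = F x + F y"
  by (simp add: linear_fun_def)

lemma linear_fun_scale: "linear_fun F \<Longrightarrow> F (\<lambda>p. c * x p) = (\<lambda>p. c * F x p)"
  by (simp add: linear_fun_def)

lemma linear_fun_zero: "linear_fun F \<Longrightarrow> F 0 = 0"
  using linear_fun_scale[of F 0 0] by (simp add: zero_fun_def)

lemma linear_fun_compose: "linear_fun F \<Longrightarrow> linear_fun G \<Longrightarrow> linear_fun (\<lambda>x. F (G x))"
  by (simp add: linear_fun_def)

lemma subsp_vimage:
  assumes F: "linear_fun F" and V: "subsp V"
  shows "subsp {x. F x \<in> V}"
  unfolding subsp_def mem_Collect_eq
  using subsp_zero[OF V] subsp_add[OF V] subsp_scale[OF V]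
  by (simp only: linear_fun_zero[OF F] linear_fun_add[OF F] linear_fun_scale[OF F]) blast

lemma lspan_base: "x \<in> X \<Longrightarrow> x \<in> lspan X"
  unfolding lspan_def by (rule CollectI, rule exI[of _ "{x}"], rule exI[of _ "\<lambda>_. 1"]) auto

lemma lspan_minimal:
  assumes "X \<subseteq> V" "subsp V"
  shows "lspan X \<subseteq> V"
  using assms unfolding lspan_def by (auto intro!: subsp_sum subsp_scale)

lemma subsp_lspan: "subsp (lspan X)"
  unfolding subsp_def
proof (intro conjI ballI allI impI)
  show "0 \<in> lspan X"
    unfolding lspan_def by (rule CollectI, rule exI[of _ "{}"]) auto
next
  fix x y assume "x \<in> lspan X" "y \<in> lspan X"
  then obtain F c G d where F: "finite F" "F \<subseteq> X" "x = (\<Sum>z\<in>F. (\<lambda>p. c z * z p))"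
    and G: "finite G" "G \<subseteq> X" "y = (\<Sum>z\<in>G. (\<lambda>p. d z * z p))"
    unfolding lspan_def by blast
  define c' d' where "c' z = (if z \<in> F then c z else 0)" and "d' z = (if z \<in> G then d z else 0)"
    for z
  have "x = (\<Sum>z\<in>F \<union> G. (\<lambda>p. c' z * z p))" "y = (\<Sum>z\<in>F \<union> G. (\<lambda>p. d' z * z p))"
    unfolding F(3) G(3) c'_def d'_def
    by (rule sum.mono_neutral_cong_left; use F G in \<open>simp add: zero_fun_def\<close>)+
  then have "x + y = (\<Sum>z\<in>F \<union> G. (\<lambda>p. (c' z + d' z) * z p))"
    by (simp add: fun_eq_iff sum_fun_apply sum.distrib distrib_right)
  then show "x + y \<in> lspan X"
    unfolding lspan_def using F G by (intro CollectI exI[of _ "F \<union> G"]) auto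
next
  fix a x assume "x \<in> lspan X"
  then obtain F c where F: "finite F" "F \<subseteq> X" "x = (\<Sum>z\<in>F. (\<lambda>p. c z * z p))"
    unfolding lspan_def by blast
  have "(\<lambda>p. a * x p) = (\<Sum>z\<in>F. (\<lambda>p. (a * c z) * z p))"
    unfolding F(3) by (auto simp: fun_eq_iff sum_fun_apply sum_distrib_left mult.assoc)
  then show "(\<lambda>p. a * x p) \<in> lspan X"
    unfolding lspan_def using F by (intro CollectI exI[of _ F]) auto
qed

lemma linear_fun_lspan_subset:
  assumes "linear_fun F" "subsp V" "\<And>x. x \<in> X \<Longrightarrow> F x \<in> V" "v \<in> lspan X"
  shows "F v \<in> V"
  using lspan_minimal[of X "{x. F x \<in> V}"] subsp_vimage[OF assms(1,2)] assms(3,4) by blast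

lemma pair_eq_sum_superset:
  assumes "finite S" "supp h \<subseteq> S"
  shows "pair f h = (\<Sum>b\<in>S. f b * h b)"
  unfolding pair_def
  by (rule sum.mono_neutral_left) (use assms in \<open>auto simp: supp_def\<close>)

lemma pair_add_left: "pair (f + g) h = pair f h + pair g h"
  by (simp add: pair_def sum.distrib algebra_simps)

lemma pair_scale_left: "pair (\<lambda>p. c * f p) h = c * pair f h"
  by (simp add: pair_def sum_distrib_left algebra_simps)

lemma pair_zero_left: "pair 0 h = 0"
  by (simp add: pair_def)

lemma pair_diff_left: "pair (f - g) h = pair f h - pair g h"
  by (simp add: pair_def sum_subtractf algebra_simps)

lemma pair_sum_left: "pair (sum F N) h = (\<Sum>n\<in>N. pair (F n) h)"
proof (induction N rule: infinite_finite_induct)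
  case (insert x N)
  then show ?case by (simp only: sum.insert[OF insert(1,2)] pair_add_left insert(3))
qed (simp_all add: pair_def)

lemma pair_cong_left: "(\<And>b. b \<in> supp h \<Longrightarrow> f b = g b) \<Longrightarrow> pair f h = pair g h"
  unfolding pair_def by (rule sum.cong) auto

lemma subsp_pair_left_zero: "subsp {f. pair f h = 0}"
  by (simp add: subsp_def pair_zero_left pair_add_left pair_scale_left)

lemma pair_add_right: "x \<in> Hset \<Longrightarrow> y \<in> Hset \<Longrightarrow> pair f (x + y) = pair f x + pair f y"
proof -
  assume "x \<in> Hset" "y \<in> Hset"
  then have fin: "finite (supp x \<union> supp y)" by (simp add: Hset_def)
  have "supp (x + y) \<subseteq> supp x \<union> supp y" by (auto simp: supp_def)
  then show ?thesis
    using pair_eq_sum_superset[OF fin, of "x + y" f] pair_eq_sum_superset[OF fin, of x f]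
      pair_eq_sum_superset[OF fin, of y f]
    by (simp add: sum.distrib distrib_left)
qed

lemma pair_scale_right: "pair f (\<lambda>p. c * x p) = c * pair f x"
proof (cases "c = 0")
  case False
  then have "supp (\<lambda>p. c * x p) = supp x" by (auto simp: supp_def)
  then show ?thesis by (simp add: pair_def sum_distrib_left algebra_simps)
qed (simp add: pair_def supp_def)

lemma pair_zero_right: "pair f 0 = 0"
  by (simp add: pair_def supp_def)

definition annihilator :: "('b \<Rightarrow> 'k::field) set \<Rightarrow> ('b \<Rightarrow> 'k) set" where
  "annihilator F = {h \<in> Hset. \<forall>f\<in>F. pair f h = 0}"

lemma subsp_annihilator: "subsp (annihilator F)"
  unfolding subsp_def annihilator_def
  by (auto simp: subsp_zero[OF subsp_Hset] subsp_add[OF subsp_Hset] subsp_scale[OF subsp_Hset]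
      pair_zero_right pair_add_right pair_scale_right)

lemma supp_tprod: "supp (tprod x y) = supp x \<times> supp y"
  by (auto simp: supp_def tprod_def)

lemma tprod_Hset: "x \<in> Hset \<Longrightarrow> y \<in> Hset \<Longrightarrow> tprod x y \<in> Hset"
  by (simp add: Hset_def supp_tprod)

lemma pair_tprod: "pair (tprod f g) (tprod x y) = pair f x * pair g y"
  unfolding pair_def supp_tprod sum_product sum.cartesian_product
  by (rule sum.cong) (auto simp: tprod_def)

lemma pair_tprod_eq_sum:
  assumes "finite S" "finite T" "supp X \<subseteq> S \<times> T"
  shows "pair (tprod f g) X = (\<Sum>p\<in>S. \<Sum>q\<in>T. f p * g q * X (p, q))"
proof -
  have "pair (tprod f g) X = (\<Sum>z\<in>S \<times> T. tprod f g z * X z)"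
    by (rule pair_eq_sum_superset) (use assms in auto)
  then show ?thesis
    unfolding sum.cartesian_product by (simp add: tprod_def split_def)
qed

lemma Hset_column: "X \<in> Hset \<Longrightarrow> (\<lambda>p. X (p, q)) \<in> Hset"
  unfolding Hset_def mem_Collect_eq
  by (rule finite_subset[of _ "fst ` supp X"]) (force simp: supp_def)+

lemma Hset_row: "X \<in> Hset \<Longrightarrow> (\<lambda>q. X (p, q)) \<in> Hset"
  unfolding Hset_def mem_Collect_eq
  by (rule finite_subset[of _ "snd ` supp X"]) (force simp: supp_def)+

lemma pair_tprod_unitv_right:
  assumes "X \<in> Hset"
  shows "pair (tprod f (unitv q)) X = pair f (\<lambda>p. X (p, q))"
proof -
  let ?S = "fst ` supp X" and ?T = "insert q (snd ` supp X)"
  have fin: "finite ?S" "finite ?T" using assms by (auto simp: Hset_def)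
  have "pair (tprod f (unitv q)) X = (\<Sum>p\<in>?S. \<Sum>q'\<in>?T. f p * unitv q q' * X (p, q'))"
    by (rule pair_tprod_eq_sum) (use fin in force)+
  also have "\<dots> = (\<Sum>p\<in>?S. f p * X (p, q))"
    by (intro sum.cong refl, subst sum_eq_single[where a = q]) (use fin in \<open>auto simp: unitv_def\<close>)
  also have "\<dots> = pair f (\<lambda>p. X (p, q))"
    by (rule pair_eq_sum_superset[symmetric]) (use fin in \<open>force simp: supp_def\<close>)+
  finally show ?thesis .
qed

lemma pair_tprod_unitv_left:
  assumes "X \<in> Hset"
  shows "pair (tprod (unitv p) g) X = pair g (\<lambda>q. X (p, q))"
proof -
  let ?S = "insert p (fst ` supp X)" and ?T = "snd ` supp X"
  have fin: "finite ?S" "finite ?T" using assms by (auto simp: Hset_def)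
  have "pair (tprod (unitv p) g) X = (\<Sum>p'\<in>?S. \<Sum>q\<in>?T. unitv p p' * g q * X (p', q))"
    by (rule pair_tprod_eq_sum) (use fin in force)+
  also have "\<dots> = (\<Sum>q\<in>?T. \<Sum>p'\<in>?S. unitv p p' * g q * X (p', q))"
    by (rule sum.swap)
  also have "\<dots> = (\<Sum>q\<in>?T. g q * X (p, q))"
    by (intro sum.cong refl, subst sum_eq_single[where a = p]) (use fin in \<open>auto simp: unitv_def\<close>)
  also have "\<dots> = pair g (\<lambda>q. X (p, q))"
    by (rule pair_eq_sum_superset[symmetric]) (use fin in \<open>force simp: supp_def\<close>)+
  finally show ?thesis .
qed

lemma supp_diff_rank_one:
  fixes X :: "'b \<times> 'b \<Rightarrow> 'k::field"
  assumes "X (p0, q0) \<noteq> 0"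
  shows "supp (X - tprod (\<lambda>p. X (p, q0)) (\<lambda>q. inverse (X (p0, q0)) * X (p0, q)))
    \<subseteq> (fst ` supp X - {p0}) \<times> snd ` supp X"
proof clarify
  fix p q
  assume "(p, q) \<in> supp (X - tprod (\<lambda>p. X (p, q0)) (\<lambda>q. inverse (X (p0, q0)) * X (p0, q)))"
  then have ne: "X (p, q) \<noteq> X (p, q0) * (inverse (X (p0, q0)) * X (p0, q))"
    by (simp add: supp_def tprod_def)
  then have "p \<noteq> p0" using assms by auto
  moreover have "p \<in> fst ` supp X"
    using ne by (cases "X (p, q) = 0") (force simp: supp_def)+
  moreover have "q \<in> snd ` supp X"
    using ne by (cases "X (p, q) = 0") (force simp: supp_def)+
  ultimately show "p \<in> fst ` supp X - {p0} \<and> q \<in> snd ` supp X" by simp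
qed

lemma rank_one_reduction:
  fixes X :: "'b \<times> 'b \<Rightarrow> 'k::field"
  assumes X: "X \<in> Hset" and pq: "X (p0, q0) \<noteq> 0"
  defines "X' \<equiv> X - tprod (\<lambda>p. X (p, q0)) (\<lambda>q. inverse (X (p0, q0)) * X (p0, q))"
  shows "X' \<in> Hset" "card (fst ` supp X') < card (fst ` supp X)"
proof -
  have fin: "finite (fst ` supp X)" "finite (snd ` supp X)"
    using X by (auto simp: Hset_def)
  have supp': "supp X' \<subseteq> (fst ` supp X - {p0}) \<times> snd ` supp X"
    unfolding X'_def by (rule supp_diff_rank_one[of X p0 q0, OF pq])
  then show "X' \<in> Hset"
    unfolding Hset_def mem_Collect_eq by (rule finite_subset) (use fin in auto)
  have "card (fst ` supp X') \<le> card (fst ` supp X - {p0})"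
    using supp' fin by (intro card_mono) auto
  also have "\<dots> < card (fst ` supp X)"
    using pq fin by (intro card_Diff1_less) (force simp: supp_def)+
  finally show "card (fst ` supp X') < card (fst ` supp X)" .
qed

lemma column_diff_tprod:
  assumes "subsp V" "(\<lambda>p. X (p, q)) \<in> V" "v \<in> V"
  shows "(\<lambda>p. (X - tprod v w) (p, q)) \<in> V"
proof -
  have "(\<lambda>p. (X - tprod v w) (p, q)) = (\<lambda>p. X (p, q)) - (\<lambda>p. w q * v p)"
    by (simp add: tprod_def fun_eq_iff mult.commute)
  then show ?thesis using subsp_diff[OF assms(1,2) subsp_scale[OF assms(1,3)]] by simp
qed

lemma row_diff_tprod:
  assumes "subsp W" "(\<lambda>q. X (p, q)) \<in> W" "w \<in> W"
  shows "(\<lambda>q. (X - tprod v w) (p, q)) \<in> W"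
proof -
  have "(\<lambda>q. (X - tprod v w) (p, q)) = (\<lambda>q. X (p, q)) - (\<lambda>q. v p * w q)"
    by (simp add: tprod_def fun_eq_iff)
  then show ?thesis using subsp_diff[OF assms(1,2) subsp_scale[OF assms(1,3)]] by simp
qed

text \<open>Induction on the number of nonzero rows: subtracting a suitable rank-one tensor kills one row.\<close>

lemma tspan_by_slices:
  fixes X :: "'b \<times> 'b \<Rightarrow> 'k::field"
  assumes "X \<in> Hset" "subsp V" "subsp W"
    "\<And>q. (\<lambda>p. X (p, q)) \<in> V" "\<And>p. (\<lambda>q. X (p, q)) \<in> W"
  shows "X \<in> tspan V W"
  using assms
proof (induction "card (fst ` supp X)" arbitrary: X rule: less_induct)
  case less
  show ?case
  proof (cases "supp X = {}")
    case True
    then have "X = 0" by (auto simp: supp_def fun_eq_iff)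
    then show ?thesis unfolding tspan_def by (simp add: subsp_zero[OF subsp_lspan])
  next
    case False
    then obtain p0 q0 where pq: "X (p0, q0) \<noteq> 0" by (auto simp: supp_def)
    define v where "v = (\<lambda>p. X (p, q0))"
    define w where "w = (\<lambda>q. inverse (X (p0, q0)) * X (p0, q))"
    have v: "v \<in> V" and w: "w \<in> W"
      unfolding v_def w_def using less.prems subsp_scale by blast+
    have "X - tprod v w \<in> tspan V W"
      using rank_one_reduction[OF less.prems(1) pq] less.prems(2-5)
        column_diff_tprod[OF less.prems(2) _ v] row_diff_tprod[OF less.prems(3) _ w]
      by (intro less.hyps) (simp_all add: v_def w_def)
    moreover have "tprod v w \<in> tspan V W"
      unfolding tspan_def using v w by (intro lspan_base) blast
    ultimately have "(X - tprod v w) + tprod v w \<in> tspan V W"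
      unfolding tspan_def by (rule subsp_add[OF subsp_lspan])
    then show ?thesis by simp
  qed
qed

lemma pair_tspan_eq_zero:
  assumes "Y \<in> tspan C C'" "C \<subseteq> Hset" "C' \<subseteq> Hset"
    "\<And>x y. x \<in> C \<Longrightarrow> y \<in> C' \<Longrightarrow> pair f x * pair g y = 0"
  shows "pair (tprod f g) Y = 0"
proof -
  have "tspan C C' \<subseteq> annihilator {tprod f g}"
    unfolding tspan_def
    by (rule lspan_minimal[OF _ subsp_annihilator])
      (use assms(2-4) in \<open>auto simp: annihilator_def pair_tprod intro: tprod_Hset\<close>)
  then show ?thesis using assms(1) by (auto simp: annihilator_def)
qed

definition tspan_ideal :: "('b \<Rightarrow> 'k::field) set \<Rightarrow> ('b \<times> 'b \<Rightarrow> 'k) set" where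
  "tspan_ideal I = lspan ({tprod x y | x y. x \<in> I \<and> y \<in> Hset} \<union> {tprod x y | x y. x \<in> Hset \<and> y \<in> I})"

lemma tprod_in_tspan_ideal_left: "x \<in> I \<Longrightarrow> y \<in> Hset \<Longrightarrow> tprod x y \<in> tspan_ideal I"
  unfolding tspan_ideal_def by (rule lspan_base) blast

lemma tprod_in_tspan_ideal_right: "x \<in> Hset \<Longrightarrow> y \<in> I \<Longrightarrow> tprod x y \<in> tspan_ideal I"
  unfolding tspan_ideal_def by (rule lspan_base) blast

lemma pair_tspan_ideal_annihilator:
  assumes "F \<in> tspan_ideal I" "h \<in> annihilator I" "k \<in> annihilator I"
  shows "pair F (tprod h k) = 0"
proof -
  have "tspan_ideal I \<subseteq> {F. pair F (tprod h k) = 0}"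
    unfolding tspan_ideal_def
    by (rule lspan_minimal[OF _ subsp_pair_left_zero])
      (use assms(2,3) in \<open>auto simp: annihilator_def pair_tprod\<close>)
  then show ?thesis using assms(1) by blast
qed

section \<open>Graded connected Hopf algebras and the graded dual\<close>

lemma mem_dset [simp]: "b \<in> dset deg n \<longleftrightarrow> deg b = n"
  by (simp add: dset_def)

lemma mem_lowset [simp]: "b \<in> lowset deg n \<longleftrightarrow> deg b \<le> n"
  by (simp add: lowset_def)

locale gc_hopf =
  fixes deg :: "'b \<Rightarrow> nat" and u :: 'b
    and M D :: "'b \<Rightarrow> 'b \<Rightarrow> 'b \<Rightarrow> 'k::field" and eps :: "'b \<Rightarrow> 'k" and A :: "'b \<Rightarrow> 'b \<Rightarrow> 'k"
  assumes hopf: "graded_connected_hopf deg u M D eps A"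
begin

lemma finite_dset: "finite (dset deg n)"
  using hopf unfolding graded_connected_hopf_def by (elim conjE) blast

lemma deg_eq_0_iff: "deg b = 0 \<longleftrightarrow> b = u"
proof -
  have "dset deg 0 = {u}"
    using hopf unfolding graded_connected_hopf_def by (elim conjE)
  then show ?thesis by (auto simp: dset_def)
qed

lemma deg_u [simp]: "deg u = 0"
  by (simp add: deg_eq_0_iff)

lemma M_nonzero_deg: "M b c d \<noteq> 0 \<Longrightarrow> deg d = deg b + deg c"
  using hopf unfolding graded_connected_hopf_def by (elim conjE) blast

lemma D_nonzero_deg: "D b c d \<noteq> 0 \<Longrightarrow> deg c + deg d = deg b"
  using hopf unfolding graded_connected_hopf_def by (elim conjE) blast

lemma A_nonzero_deg: "A b d \<noteq> 0 \<Longrightarrow> deg d = deg b"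
  using hopf unfolding graded_connected_hopf_def by (elim conjE) blast

lemma M_unit_right: "M b u d = (if d = b then 1 else 0)"
  using hopf unfolding graded_connected_hopf_def by (elim conjE) (simp only:)

lemma D_coassoc:
  "(\<Sum>e\<in>dset deg (deg c + deg d). D b e f * D e c d)
     = (\<Sum>e\<in>dset deg (deg d + deg f). D b c e * D e d f)"
  using hopf unfolding graded_connected_hopf_def by (elim conjE) (simp only:)

lemma counit_left: "(\<Sum>c\<in>lowset deg (deg b). eps c * D b c d) = (if d = b then 1 else 0)"
  using hopf unfolding graded_connected_hopf_def by (elim conjE) (simp only:)

lemma counit_right: "(\<Sum>c\<in>lowset deg (deg b). D b d c * eps c) = (if d = b then 1 else 0)"
  using hopf unfolding graded_connected_hopf_def by (elim conjE) (simp only:)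

lemma bialgebra_compat:
  "(\<Sum>e\<in>dset deg (deg b + deg c). M b c e * D e p q)
     = (\<Sum>b1\<in>lowset deg (deg b). \<Sum>b2\<in>lowset deg (deg b).
        \<Sum>c1\<in>lowset deg (deg c). \<Sum>c2\<in>lowset deg (deg c).
          D b b1 b2 * D c c1 c2 * M b1 c1 p * M b2 c2 q)"
  using hopf unfolding graded_connected_hopf_def by (elim conjE) (simp only:)

lemma D_u: "D u p q = (if p = u \<and> q = u then 1 else 0)"
  using hopf unfolding graded_connected_hopf_def by (elim conjE) (simp only:)

lemma eps_u: "eps u = 1"
  using hopf unfolding graded_connected_hopf_def by (elim conjE) (simp only:)

lemma antipode_left:
  "(\<Sum>c\<in>lowset deg (deg b). \<Sum>d\<in>lowset deg (deg b). \<Sum>e\<in>dset deg (deg c).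
      D b c d * A c e * M e d f) = eps b * (if f = u then 1 else 0)"
  using hopf unfolding graded_connected_hopf_def by (elim conjE) (simp only:)

lemma finite_lowset: "finite (lowset deg n)"
proof -
  have "lowset deg n = (\<Union>i\<le>n. dset deg i)" by auto
  then show ?thesis using finite_dset by simp
qed

lemma D_eq_0_left: "deg b < deg c \<Longrightarrow> D b c d = 0"
  using D_nonzero_deg by fastforce

lemma D_eq_0_right: "deg b < deg d \<Longrightarrow> D b c d = 0"
  using D_nonzero_deg by fastforce

lemma D_unit_right: "D b c u = (if c = b then 1 else 0)"
proof (cases "deg c = deg b")
  case True
  have "(\<Sum>c'\<in>lowset deg (deg b). D b c c' * eps c') = D b c u * eps u"
  proof (rule sum_eq_single)
    fix x assume "x \<noteq> u"
    then have "D b c x = 0" using D_nonzero_deg[of b c x] True deg_eq_0_iff[of x] by auto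
    then show "D b c x * eps x = 0" by simp
  qed (simp_all add: finite_lowset)
  then show ?thesis using counit_right[of b c] eps_u by simp
next
  case False
  then show ?thesis using D_nonzero_deg[of b c u] by auto
qed

lemma D_unit_left: "D b u d = (if d = b then 1 else 0)"
proof (cases "deg d = deg b")
  case True
  have "(\<Sum>c\<in>lowset deg (deg b). eps c * D b c d) = eps u * D b u d"
  proof (rule sum_eq_single)
    fix x assume "x \<noteq> u"
    then have "D b x d = 0" using D_nonzero_deg[of b x d] True deg_eq_0_iff[of x] by auto
    then show "eps x * D b x d = 0" by simp
  qed (simp_all add: finite_lowset)
  then show ?thesis using counit_left[of b d] eps_u by simp
next
  case False
  then show ?thesis using D_nonzero_deg[of b u d] by auto
qed

lemma eps_eq_indicator: "eps b = (if b = u then 1 else 0)"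
proof -
  have "(\<Sum>c\<in>lowset deg (deg b). eps c * D b c u) = eps b * D b b u"
    by (rule sum_eq_single) (simp_all add: finite_lowset D_unit_right)
  then show ?thesis using counit_left[of b u] by (simp add: D_unit_right)
qed

lemma dset_0: "dset deg 0 = {u}"
  using deg_eq_0_iff by (simp add: set_eq_iff)

lemma lowset_0: "lowset deg 0 = {u}"
  using deg_eq_0_iff by (simp add: set_eq_iff)

definition top_deg :: "('b \<Rightarrow> 'k) \<Rightarrow> nat" where
  "top_deg h = Max (insert 0 (deg ` supp h))"

lemma deg_le_top_deg: "h \<in> Hset \<Longrightarrow> h b \<noteq> 0 \<Longrightarrow> deg b \<le> top_deg h"
  unfolding top_deg_def Hset_def by (rule Max_ge) (auto simp: supp_def)

lemma Hset_if_deg_bounded: "(\<And>b. h b \<noteq> 0 \<Longrightarrow> deg b \<le> n) \<Longrightarrow> h \<in> Hset"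
  unfolding Hset_def mem_Collect_eq
  by (rule finite_subset[OF _ finite_lowset[of n]]) (auto simp: supp_def)

lemma unitv_Hset: "(unitv p :: 'b \<Rightarrow> 'k) \<in> Hset"
  by (rule Hset_if_deg_bounded[of _ "deg p"]) (auto simp: unitv_def split: if_splits)

lemma comp_Hset: "comp deg n (f :: 'b \<Rightarrow> 'k) \<in> Hset"
  by (rule Hset_if_deg_bounded[of _ n]) (auto simp: comp_def split: if_splits)

end

context gc_hopf
begin

lemma conv_eq_sum_superset:
  assumes "finite S" "finite S'" "lowset deg (deg b) \<subseteq> S" "lowset deg (deg b) \<subseteq> S'"
  shows "conv deg D f g b = (\<Sum>c\<in>S. \<Sum>d\<in>S'. D b c d * f c * g d)"
proof -
  have "conv deg D f g b = (\<Sum>c\<in>lowset deg (deg b). \<Sum>d\<in>S'. D b c d * f c * g d)"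
    unfolding conv_def
    by (intro sum.cong refl sum.mono_neutral_left) (use assms D_eq_0_right[of b] in auto)
  also have "\<dots> = (\<Sum>c\<in>S. \<Sum>d\<in>S'. D b c d * f c * g d)"
    by (rule sum.mono_neutral_left) (use assms D_eq_0_left[of b] in auto)
  finally show ?thesis .
qed

lemma conv_Hset:
  assumes "f \<in> Hset" "g \<in> Hset"
  shows "conv deg D f g \<in> Hset"
proof (rule Hset_if_deg_bounded[of _ "top_deg f + top_deg g"])
  fix b assume "conv deg D f g b \<noteq> 0"
  then obtain c d where "D b c d * f c * g d \<noteq> 0"
    unfolding conv_def by (meson sum.not_neutral_contains_not_neutral)
  then have "D b c d \<noteq> 0" "f c \<noteq> 0" "g d \<noteq> 0" by auto
  then show "deg b \<le> top_deg f + top_deg g"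
    using D_nonzero_deg deg_le_top_deg[OF assms(1)] deg_le_top_deg[OF assms(2)] by fastforce
qed

lemma dual_ideal_Hset: "dual_ideal deg D Hset"
  unfolding dual_ideal_def using subsp_Hset conv_Hset by blast

lemma linear_fun_conv_left: "linear_fun (\<lambda>f. conv deg D f g)"
  by (rule linear_funI)
    (simp_all add: conv_def fun_eq_iff sum.distrib[symmetric] sum_distrib_left algebra_simps)

lemma linear_fun_conv_right: "linear_fun (conv deg D g)"
  by (rule linear_funI)
    (simp_all add: conv_def fun_eq_iff sum.distrib[symmetric] sum_distrib_left algebra_simps)

lemma conv_unit_left: "conv deg D (unitv u) g = g"
proof
  fix b
  have "conv deg D (unitv u) g b = (\<Sum>d\<in>lowset deg (deg b). D b u d * g d)"
    unfolding conv_def by (subst sum_eq_single[where a = u]) (auto simp: finite_lowset unitv_def)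
  also have "\<dots> = g b"
    by (subst sum_eq_single[where a = b]) (auto simp: finite_lowset D_unit_left)
  finally show "conv deg D (unitv u) g b = g b" .
qed

lemma conv_unit_right: "conv deg D g (unitv u) = g"
proof
  fix b
  have "conv deg D g (unitv u) b = (\<Sum>c\<in>lowset deg (deg b). D b c u * g c)"
    unfolding conv_def
    by (intro sum.cong refl, subst sum_eq_single[where a = u]) (auto simp: finite_lowset unitv_def)
  also have "\<dots> = g b"
    by (subst sum_eq_single[where a = b]) (auto simp: finite_lowset D_unit_right)
  finally show "conv deg D g (unitv u) b = g b" .
qed

lemma conv_at_u: "conv deg D f g u = f u * g u"
  by (simp add: conv_def lowset_0 D_u)

lemma D_coassoc_lowset:
  "(\<Sum>e\<in>lowset deg (deg b). D b e d * D e p c) = (\<Sum>e\<in>lowset deg (deg b). D b p e * D e c d)"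
proof -
  have "(\<Sum>e\<in>lowset deg (deg b). D b e d * D e p c) = (\<Sum>e\<in>dset deg (deg p + deg c). D b e d * D e p c)"
    by (rule sum.mono_neutral_cong)
      (use D_nonzero_deg[of _ p c] D_eq_0_left[of b _ d] in \<open>auto simp: finite_lowset finite_dset\<close>)
  also have "\<dots> = (\<Sum>e\<in>dset deg (deg c + deg d). D b p e * D e c d)"
    by (rule D_coassoc)
  also have "\<dots> = (\<Sum>e\<in>lowset deg (deg b). D b p e * D e c d)"
    by (rule sum.mono_neutral_cong)
      (use D_nonzero_deg[of _ c d] D_eq_0_right[of b _ p] in \<open>auto simp: finite_lowset finite_dset\<close>)
  finally show ?thesis .
qed

lemma conv_assoc: "conv deg D (conv deg D f g) k = conv deg D f (conv deg D g k)"
proof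
  fix b
  let ?L = "lowset deg (deg b)"
  have fin: "finite ?L" by (rule finite_lowset)
  have fg: "conv deg D f g e = (\<Sum>p\<in>?L. \<Sum>c\<in>?L. D e p c * f p * g c)" if "e \<in> ?L" for e
    by (rule conv_eq_sum_superset) (use that fin in auto)
  have gk: "conv deg D g k e = (\<Sum>c\<in>?L. \<Sum>d\<in>?L. D e c d * g c * k d)" if "e \<in> ?L" for e
    by (rule conv_eq_sum_superset) (use that fin in auto)
  have "conv deg D (conv deg D f g) k b = (\<Sum>e\<in>?L. \<Sum>d\<in>?L. D b e d * conv deg D f g e * k d)"
    by (rule conv_eq_sum_superset) (use fin in auto)
  also have "\<dots> = (\<Sum>e\<in>?L. \<Sum>d\<in>?L. \<Sum>p\<in>?L. \<Sum>c\<in>?L. (f p * g c * k d) * (D b e d * D e p c))"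
    by (intro sum.cong refl) (simp add: fg sum_distrib_left sum_distrib_right mult_ac)
  also have "\<dots> = (\<Sum>d\<in>?L. \<Sum>p\<in>?L. \<Sum>c\<in>?L. \<Sum>e\<in>?L. (f p * g c * k d) * (D b e d * D e p c))"
    by (subst sum.swap, rule sum.cong[OF refl], rule sum_rotate3)
  also have "\<dots> = (\<Sum>p\<in>?L. \<Sum>c\<in>?L. \<Sum>d\<in>?L. \<Sum>e\<in>?L. (f p * g c * k d) * (D b e d * D e p c))"
    by (rule sum_rotate3)
  also have "\<dots> = (\<Sum>p\<in>?L. \<Sum>c\<in>?L. \<Sum>d\<in>?L. \<Sum>e\<in>?L. (f p * g c * k d) * (D b p e * D e c d))"
    by (simp only: sum_distrib_left[symmetric] D_coassoc_lowset)
  also have "\<dots> = (\<Sum>p\<in>?L. \<Sum>e\<in>?L. \<Sum>c\<in>?L. \<Sum>d\<in>?L. (f p * g c * k d) * (D b p e * D e c d))"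
    by (rule sum.cong[OF refl], rule sum_rotate3[symmetric])
  also have "\<dots> = (\<Sum>p\<in>?L. \<Sum>e\<in>?L. D b p e * f p * conv deg D g k e)"
    by (intro sum.cong refl) (simp add: gk sum_distrib_left sum_distrib_right mult_ac)
  also have "\<dots> = conv deg D f (conv deg D g k) b"
    by (rule conv_eq_sum_superset[symmetric]) (use fin in auto)
  finally show "conv deg D (conv deg D f g) k b = conv deg D f (conv deg D g k) b" .
qed

lemma comp_conv_summand:
  "D b c d * f c * g d * (if deg b = n then 1 else 0)
     = (\<Sum>i\<le>n. D b c d * comp deg i f c * comp deg (n - i) g d)"
proof (cases "D b c d = 0")
  case False
  then have deg_bcd: "deg c + deg d = deg b" by (rule D_nonzero_deg)
  show ?thesis
  proof (cases "deg b = n")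
    case True
    have "(\<Sum>i\<le>n. D b c d * comp deg i f c * comp deg (n - i) g d)
        = D b c d * comp deg (deg c) f c * comp deg (n - deg c) g d"
      by (rule sum_eq_single) (use True deg_bcd in \<open>auto simp: comp_def\<close>)
    moreover have "n - deg c = deg d" using True deg_bcd by simp
    ultimately show ?thesis using True by (simp add: comp_def)
  next
    case False
    have "(\<Sum>i\<le>n. D b c d * comp deg i f c * comp deg (n - i) g d) = 0"
      by (rule sum.neutral) (use False deg_bcd in \<open>auto simp: comp_def\<close>)
    then show ?thesis using False by simp
  qed
qed simp

lemma comp_conv:
  "comp deg n (conv deg D f g) = (\<Sum>i\<le>n. conv deg D (comp deg i f) (comp deg (n - i) g))"
proof
  fix b
  let ?L = "lowset deg (deg b)"
  have "comp deg n (conv deg D f g) b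
      = (\<Sum>c\<in>?L. \<Sum>d\<in>?L. D b c d * f c * g d * (if deg b = n then 1 else 0))"
    by (simp add: comp_def conv_def sum_distrib_right)
  also have "\<dots> = (\<Sum>c\<in>?L. \<Sum>d\<in>?L. \<Sum>i\<le>n. D b c d * comp deg i f c * comp deg (n - i) g d)"
    by (simp only: comp_conv_summand)
  also have "\<dots> = (\<Sum>i\<le>n. \<Sum>c\<in>?L. \<Sum>d\<in>?L. D b c d * comp deg i f c * comp deg (n - i) g d)"
    by (rule sum_rotate3[symmetric])
  also have "\<dots> = (\<Sum>i\<le>n. conv deg D (comp deg i f) (comp deg (n - i) g)) b"
    by (simp add: sum_fun_apply conv_def)
  finally show "comp deg n (conv deg D f g) b
      = (\<Sum>i\<le>n. conv deg D (comp deg i f) (comp deg (n - i) g)) b" .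
qed

end

context gc_hopf
begin

lemma linear_fun_comp: "linear_fun (comp deg n :: ('b \<Rightarrow> 'k) \<Rightarrow> _)"
  by (rule linear_funI) (simp_all add: comp_def fun_eq_iff)

lemma pair_comp:
  assumes "h \<in> Hset"
  shows "pair (comp deg n f) h = pair f (comp deg n h)"
proof -
  have "supp (comp deg n h) \<subseteq> supp h" by (auto simp: supp_def comp_def)
  then have "pair f (comp deg n h) = (\<Sum>b\<in>supp h. f b * comp deg n h b)"
    by (intro pair_eq_sum_superset) (use assms in \<open>simp_all add: Hset_def\<close>)
  also have "\<dots> = pair (comp deg n f) h"
    unfolding pair_def by (rule sum.cong) (auto simp: comp_def)
  finally show ?thesis by simp
qed

lemma pair_unitv: "pair f (unitv b) = f b"
  by (simp add: pair_eq_sum_superset[of "{b}"] supp_def unitv_def)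

lemma hcomult_supp:
  assumes "h \<in> Hset"
  shows "supp (hcomult D h) \<subseteq> lowset deg (top_deg h) \<times> lowset deg (top_deg h)"
proof clarify
  fix p q assume "(p, q) \<in> supp (hcomult D h)"
  then obtain b where "h b * D b p q \<noteq> 0"
    unfolding supp_def hcomult_def by (auto elim: sum.not_neutral_contains_not_neutral)
  then show "p \<in> lowset deg (top_deg h) \<and> q \<in> lowset deg (top_deg h)"
    using D_nonzero_deg[of b p q] deg_le_top_deg[OF assms, of b] by auto
qed

lemma hcomult_Hset:
  assumes "h \<in> Hset"
  shows "hcomult D h \<in> Hset"
  unfolding Hset_def mem_Collect_eq
  by (rule finite_subset[OF hcomult_supp[OF assms]]) (simp add: finite_lowset)

lemma pair_conv:
  assumes h: "h \<in> Hset"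
  shows "pair (conv deg D f g) h = pair (tprod f g) (hcomult D h)"
proof -
  let ?L = "lowset deg (top_deg h)"
  have "pair (conv deg D f g) h = (\<Sum>b\<in>supp h. \<Sum>c\<in>?L. \<Sum>d\<in>?L. f c * g d * (h b * D b c d))"
    unfolding pair_def
  proof (rule sum.cong[OF refl])
    fix b assume "b \<in> supp h"
    then have "deg b \<le> top_deg h" using deg_le_top_deg[OF h] by (simp add: supp_def)
    then have "conv deg D f g b = (\<Sum>c\<in>?L. \<Sum>d\<in>?L. D b c d * f c * g d)"
      by (intro conv_eq_sum_superset finite_lowset) auto
    then show "conv deg D f g b * h b = (\<Sum>c\<in>?L. \<Sum>d\<in>?L. f c * g d * (h b * D b c d))"
      by (simp add: sum_distrib_left sum_distrib_right mult_ac)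
  qed
  also have "\<dots> = (\<Sum>c\<in>?L. \<Sum>d\<in>?L. f c * g d * hcomult D h (c, d))"
    by (subst sum_rotate3) (simp add: hcomult_def sum_distrib_left)
  also have "\<dots> = pair (tprod f g) (hcomult D h)"
    by (rule pair_tprod_eq_sum[symmetric]) (use hcomult_supp[OF h] in \<open>simp_all add: finite_lowset\<close>)
  finally show ?thesis .
qed

lemma dual_comult_eq_sum_lowset:
  "deg b + deg c \<le> n \<Longrightarrow> dual_comult deg M f (b, c) = (\<Sum>d\<in>lowset deg n. M b c d * f d)"
  unfolding dual_comult_def prod.case
  by (rule sum.mono_neutral_cong) (use M_nonzero_deg[of b c] in \<open>auto simp: finite_dset finite_lowset\<close>)

lemma hmult_supp:
  assumes "h \<in> Hset" "k \<in> Hset"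
  shows "supp (hmult M h k) \<subseteq> lowset deg (top_deg h + top_deg k)"
proof
  fix d assume "d \<in> supp (hmult M h k)"
  then obtain b c where "h b * k c * M b c d \<noteq> 0"
    unfolding supp_def hmult_def by (auto elim!: sum.not_neutral_contains_not_neutral)
  then show "d \<in> lowset deg (top_deg h + top_deg k)"
    using M_nonzero_deg[of b c d] deg_le_top_deg[OF assms(1), of b] deg_le_top_deg[OF assms(2), of c]
    by auto
qed

lemma hmult_Hset:
  assumes "h \<in> Hset" "k \<in> Hset"
  shows "hmult M h k \<in> Hset"
  unfolding Hset_def mem_Collect_eq
  by (rule finite_subset[OF hmult_supp[OF assms]]) (simp add: finite_lowset)

lemma pair_hmult:
  assumes h: "h \<in> Hset" and k: "k \<in> Hset"
  shows "pair f (hmult M h k) = pair (dual_comult deg M f) (tprod h k)"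
proof -
  let ?S = "lowset deg (top_deg h + top_deg k)"
  have "pair f (hmult M h k) = (\<Sum>d\<in>?S. f d * hmult M h k d)"
    by (rule pair_eq_sum_superset[OF finite_lowset hmult_supp[OF h k]])
  also have "\<dots> = (\<Sum>d\<in>?S. \<Sum>b\<in>supp h. \<Sum>c\<in>supp k. h b * k c * (M b c d * f d))"
    by (simp add: hmult_def sum_distrib_left mult_ac)
  also have "\<dots> = (\<Sum>b\<in>supp h. \<Sum>c\<in>supp k. h b * k c * (\<Sum>d\<in>?S. M b c d * f d))"
    by (subst sum_rotate3) (simp add: sum_distrib_left)
  also have "\<dots> = (\<Sum>b\<in>supp h. \<Sum>c\<in>supp k. h b * k c * dual_comult deg M f (b, c))"
  proof (intro sum.cong refl)
    fix b c assume "b \<in> supp h" "c \<in> supp k"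
    then have "deg b + deg c \<le> top_deg h + top_deg k"
      using deg_le_top_deg[OF h, of b] deg_le_top_deg[OF k, of c] by (simp add: supp_def)
    then show "h b * k c * (\<Sum>d\<in>?S. M b c d * f d) = h b * k c * dual_comult deg M f (b, c)"
      by (simp add: dual_comult_eq_sum_lowset)
  qed
  also have "\<dots> = pair (dual_comult deg M f) (tprod h k)"
    unfolding pair_def supp_tprod sum.cartesian_product by (rule sum.cong) (auto simp: tprod_def)
  finally show ?thesis .
qed

lemma dual_antip_eq_sum_lowset:
  "deg b \<le> n \<Longrightarrow> dual_antip deg A f b = (\<Sum>d\<in>lowset deg n. A b d * f d)"
  unfolding dual_antip_def
  by (rule sum.mono_neutral_cong) (use A_nonzero_deg[of b] in \<open>auto simp: finite_dset finite_lowset\<close>)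

lemma hantip_supp:
  assumes "h \<in> Hset"
  shows "supp (hantip A h) \<subseteq> lowset deg (top_deg h)"
proof
  fix d assume "d \<in> supp (hantip A h)"
  then obtain b where "h b * A b d \<noteq> 0"
    unfolding supp_def hantip_def by (auto elim: sum.not_neutral_contains_not_neutral)
  then show "d \<in> lowset deg (top_deg h)"
    using A_nonzero_deg[of b d] deg_le_top_deg[OF assms, of b] by auto
qed

lemma hantip_Hset:
  assumes "h \<in> Hset"
  shows "hantip A h \<in> Hset"
  unfolding Hset_def mem_Collect_eq
  by (rule finite_subset[OF hantip_supp[OF assms]]) (simp add: finite_lowset)

lemma pair_hantip:
  assumes h: "h \<in> Hset"
  shows "pair f (hantip A h) = pair (dual_antip deg A f) h"
proof -
  let ?S = "lowset deg (top_deg h)"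
  have "pair f (hantip A h) = (\<Sum>d\<in>?S. f d * hantip A h d)"
    by (rule pair_eq_sum_superset[OF finite_lowset hantip_supp[OF h]])
  also have "\<dots> = (\<Sum>b\<in>supp h. h b * (\<Sum>d\<in>?S. A b d * f d))"
    by (simp add: hantip_def sum_distrib_left sum.swap[of _ ?S] mult_ac)
  also have "\<dots> = (\<Sum>b\<in>supp h. dual_antip deg A f b * h b)"
  proof (rule sum.cong[OF refl])
    fix b assume "b \<in> supp h"
    then have "deg b \<le> top_deg h" using deg_le_top_deg[OF h] by (simp add: supp_def)
    then show "h b * (\<Sum>d\<in>?S. A b d * f d) = dual_antip deg A f b * h b"
      by (simp add: dual_antip_eq_sum_lowset)
  qed
  finally show ?thesis by (simp add: pair_def)
qed

end

section \<open>Annihilators of ideals and of subcoalgebras\<close>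

context gc_hopf
begin

lemma graded_subsp_annihilator:
  fixes I :: "('b \<Rightarrow> 'k) set"
  assumes "graded_subsp deg I"
  shows "graded_subsp deg (annihilator I)"
  unfolding graded_subsp_def
proof (intro ballI allI)
  fix h n assume h: "h \<in> annihilator I"
  then have hH: "h \<in> Hset" by (simp add: annihilator_def)
  have "pair f (comp deg n h) = 0" if "f \<in> I" for f
    using h assms that by (simp add: annihilator_def graded_subsp_def pair_comp[OF hH, symmetric])
  then show "comp deg n h \<in> annihilator I"
    unfolding annihilator_def using comp_Hset by blast
qed

lemma hcomult_annihilator:
  assumes I: "dual_ideal deg D I" and h: "h \<in> annihilator I"
  shows "hcomult D h \<in> tspan (annihilator I) (annihilator I)"
proof -
  have hH: "h \<in> Hset" using h by (simp add: annihilator_def)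
  have X: "hcomult D h \<in> Hset" by (rule hcomult_Hset[OF hH])
  have conv_I: "conv deg D f (unitv q) \<in> I" "conv deg D (unitv q) f \<in> I" if "f \<in> I" for f q
    using I that unitv_Hset by (simp_all add: dual_ideal_def)
  have "(\<lambda>p. hcomult D h (p, q)) \<in> annihilator I" for q
  proof -
    have "pair f (\<lambda>p. hcomult D h (p, q)) = pair (conv deg D f (unitv q)) h" for f
      by (simp add: pair_tprod_unitv_right[OF X, symmetric] pair_conv[OF hH])
    then show ?thesis using h Hset_column[OF X] conv_I by (simp add: annihilator_def)
  qed
  moreover have "(\<lambda>q. hcomult D h (p, q)) \<in> annihilator I" for p
  proof -
    have "pair f (\<lambda>q. hcomult D h (p, q)) = pair (conv deg D (unitv p) f) h" for f
      by (simp add: pair_tprod_unitv_left[OF X, symmetric] pair_conv[OF hH])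
    then show ?thesis using h Hset_row[OF X] conv_I by (simp add: annihilator_def)
  qed
  ultimately show ?thesis using X by (intro tspan_by_slices subsp_annihilator)
qed

lemma graded_subcoalg_annihilator:
  assumes "dual_ideal deg D I" "graded_subsp deg I"
  shows "graded_subcoalg deg D (annihilator I)"
  unfolding graded_subcoalg_def
  using subsp_annihilator graded_subsp_annihilator[OF assms(2)] hcomult_annihilator[OF assms(1)]
  by (auto simp: annihilator_def)

lemma dual_ideal_coalg_annihilator:
  assumes C: "C \<subseteq> Hset" "\<And>x. x \<in> C \<Longrightarrow> hcomult D x \<in> tspan C C"
  shows "dual_ideal deg D {f \<in> Hset. \<forall>h\<in>C. pair f h = 0}"
  unfolding dual_ideal_def
proof (intro conjI ballI)
  show "subsp {f \<in> Hset. \<forall>h\<in>C. pair f h = 0}"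
    unfolding subsp_def
    by (auto simp: subsp_add[OF subsp_Hset] subsp_scale[OF subsp_Hset]
        pair_zero_left pair_add_left pair_scale_left)
next
  fix f g :: "'b \<Rightarrow> 'k"
  assume f: "f \<in> {f \<in> Hset. \<forall>h\<in>C. pair f h = 0}" and g: "g \<in> Hset"
  have "pair (conv deg D f g) h = 0 \<and> pair (conv deg D g f) h = 0" if "h \<in> C" for h
    unfolding pair_conv[OF subsetD[OF C(1) that]]
    by (intro conjI pair_tspan_eq_zero[OF C(2)[OF that] C(1) C(1)]) (use f in auto)
  then show "conv deg D f g \<in> {f \<in> Hset. \<forall>h\<in>C. pair f h = 0}"
    "conv deg D g f \<in> {f \<in> Hset. \<forall>h\<in>C. pair f h = 0}"
    using f g conv_Hset by auto
qed blast

lemma graded_hopf_subalg_annihilator: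
  assumes "graded_hopf_ideal_dual deg u M D A I"
  shows "graded_hopf_subalg deg u M D A (annihilator I)"
proof -
  have I: "dual_ideal deg D I" "graded_subsp deg I"
    and comult: "\<And>f. f \<in> I \<Longrightarrow> dual_comult deg M f \<in> tspan_ideal I"
    and counit: "\<And>f. f \<in> I \<Longrightarrow> f u = 0"
    and antip: "\<And>f. f \<in> I \<Longrightarrow> dual_antip deg A f \<in> I"
    using assms by (simp_all add: graded_hopf_ideal_dual_def tspan_ideal_def)
  have "unitv u \<in> annihilator I"
    using counit by (simp add: annihilator_def unitv_Hset pair_unitv)
  moreover have "hmult M h k \<in> annihilator I"
    if h: "h \<in> annihilator I" and k: "k \<in> annihilator I" for h k
  proof -
    have hk: "h \<in> Hset" "k \<in> Hset" using h k by (simp_all add: annihilator_def)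
    have "pair f (hmult M h k) = 0" if "f \<in> I" for f
      using pair_tspan_ideal_annihilator[OF comult[OF that] h k]
      by (simp add: pair_hmult[OF hk])
    then show ?thesis by (simp add: annihilator_def hmult_Hset[OF hk])
  qed
  moreover have "hantip A h \<in> annihilator I" if "h \<in> annihilator I" for h
    using that antip by (simp add: annihilator_def hantip_Hset pair_hantip)
  ultimately show ?thesis
    using graded_subcoalg_annihilator[OF I]
    by (simp add: graded_hopf_subalg_def graded_subcoalg_def)
qed

end

section \<open>The dual coproduct and the dual antipode\<close>

lemma sum_move_two_inside:
  "(\<Sum>p\<in>P. \<Sum>q\<in>Q. \<Sum>a\<in>A. \<Sum>b\<in>B. \<Sum>c\<in>C. \<Sum>d\<in>E. F p q a b c d)
     = (\<Sum>a\<in>A. \<Sum>b\<in>B. \<Sum>c\<in>C. \<Sum>d\<in>E. \<Sum>p\<in>P. \<Sum>q\<in>Q. F p q a b c d)"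
proof -
  have "(\<Sum>p\<in>P. \<Sum>q\<in>Q. \<Sum>a\<in>A. \<Sum>b\<in>B. \<Sum>c\<in>C. \<Sum>d\<in>E. F p q a b c d)
      = (\<Sum>a\<in>A. \<Sum>p\<in>P. \<Sum>q\<in>Q. \<Sum>b\<in>B. \<Sum>c\<in>C. \<Sum>d\<in>E. F p q a b c d)"
    by (rule sum_rotate3[symmetric])
  also have "\<dots> = (\<Sum>a\<in>A. \<Sum>b\<in>B. \<Sum>p\<in>P. \<Sum>q\<in>Q. \<Sum>c\<in>C. \<Sum>d\<in>E. F p q a b c d)"
    by (rule sum.cong[OF refl], rule sum_rotate3[symmetric])
  also have "\<dots> = (\<Sum>a\<in>A. \<Sum>b\<in>B. \<Sum>c\<in>C. \<Sum>p\<in>P. \<Sum>q\<in>Q. \<Sum>d\<in>E. F p q a b c d)"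
    by (rule sum.cong[OF refl], rule sum.cong[OF refl], rule sum_rotate3[symmetric])
  also have "\<dots> = (\<Sum>a\<in>A. \<Sum>b\<in>B. \<Sum>c\<in>C. \<Sum>d\<in>E. \<Sum>p\<in>P. \<Sum>q\<in>Q. F p q a b c d)"
    by (rule sum.cong[OF refl], rule sum.cong[OF refl], rule sum.cong[OF refl], rule sum_rotate3[symmetric])
  finally show ?thesis .
qed

context gc_hopf
begin

lemma dual_comult_Hset:
  assumes "f \<in> Hset"
  shows "dual_comult deg M f \<in> Hset"
proof -
  have "supp (dual_comult deg M f) \<subseteq> lowset deg (top_deg f) \<times> lowset deg (top_deg f)"
  proof clarify
    fix b c assume "(b, c) \<in> supp (dual_comult deg M f)"
    then obtain e where "deg e = deg b + deg c" "f e \<noteq> 0"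
      unfolding supp_def dual_comult_def by (auto elim: sum.not_neutral_contains_not_neutral)
    then show "b \<in> lowset deg (top_deg f) \<and> c \<in> lowset deg (top_deg f)"
      using deg_le_top_deg[OF assms, of e] by auto
  qed
  then show ?thesis
    unfolding Hset_def mem_Collect_eq by (rule finite_subset) (simp add: finite_lowset)
qed

lemma linear_fun_dual_comult: "linear_fun (dual_comult deg M)"
  by (rule linear_funI)
    (auto simp: fun_eq_iff dual_comult_def sum.distrib sum_distrib_left algebra_simps)

text \<open>The convolution product of \<open>(H \<otimes> H)\<^sup>*\<close>, which contains \<open>H\<^sup>* \<otimes> H\<^sup>*\<close>.\<close>

definition tensor_conv :: "('b \<times> 'b \<Rightarrow> 'k) \<Rightarrow> ('b \<times> 'b \<Rightarrow> 'k) \<Rightarrow> ('b \<times> 'b \<Rightarrow> 'k)" where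
  "tensor_conv X Y = (\<lambda>(b, c). \<Sum>b1\<in>lowset deg (deg b). \<Sum>b2\<in>lowset deg (deg b).
      \<Sum>c1\<in>lowset deg (deg c). \<Sum>c2\<in>lowset deg (deg c).
        D b b1 b2 * D c c1 c2 * X (b1, c1) * Y (b2, c2))"

lemma tensor_conv_tprod: "tensor_conv (tprod a b) (tprod a' b') = tprod (conv deg D a a') (conv deg D b b')"
proof (rule ext, clarify)
  fix x y
  let ?Lx = "lowset deg (deg x)" and ?Ly = "lowset deg (deg y)"
  have "tprod (conv deg D a a') (conv deg D b b') (x, y)
      = (\<Sum>b1\<in>?Lx. \<Sum>b2\<in>?Lx. D x b1 b2 * a b1 * a' b2) * (\<Sum>c1\<in>?Ly. \<Sum>c2\<in>?Ly. D y c1 c2 * b c1 * b' c2)"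
    by (simp add: tprod_def conv_def)
  also have "\<dots> = (\<Sum>b1\<in>?Lx. \<Sum>b2\<in>?Lx.
      (D x b1 b2 * a b1 * a' b2) * (\<Sum>c1\<in>?Ly. \<Sum>c2\<in>?Ly. D y c1 c2 * b c1 * b' c2))"
    by (simp only: sum_distrib_right)
  also have "\<dots> = (\<Sum>b1\<in>?Lx. \<Sum>b2\<in>?Lx. \<Sum>c1\<in>?Ly. \<Sum>c2\<in>?Ly.
      (D x b1 b2 * a b1 * a' b2) * (D y c1 c2 * b c1 * b' c2))"
    by (simp only: sum_distrib_left)
  also have "\<dots> = tensor_conv (tprod a b) (tprod a' b') (x, y)"
    unfolding tensor_conv_def tprod_def prod.case by (intro sum.cong refl) (simp add: mult_ac)
  finally show "tensor_conv (tprod a b) (tprod a' b') (x, y) = tprod (conv deg D a a') (conv deg D b b') (x, y)" ..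
qed

lemma linear_fun_tensor_conv_left: "linear_fun (\<lambda>X. tensor_conv X Y)"
  by (rule linear_funI)
    (auto simp: fun_eq_iff tensor_conv_def sum.distrib[symmetric] sum_distrib_left algebra_simps)

lemma linear_fun_tensor_conv_right: "linear_fun (tensor_conv Y)"
  by (rule linear_funI)
    (auto simp: fun_eq_iff tensor_conv_def sum.distrib[symmetric] sum_distrib_left algebra_simps)

lemma Hset_in_tspan_Hset: "X \<in> Hset \<Longrightarrow> X \<in> tspan Hset Hset"
  by (intro tspan_by_slices subsp_Hset Hset_column Hset_row)

lemma dual_comult_conv:
  "dual_comult deg M (conv deg D f g) = tensor_conv (dual_comult deg M f) (dual_comult deg M g)"
proof (rule ext, clarify)
  fix x y
  let ?N = "deg x + deg y"
  let ?LN = "lowset deg ?N" and ?Lx = "lowset deg (deg x)" and ?Ly = "lowset deg (deg y)"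
  have "dual_comult deg M (conv deg D f g) (x, y)
      = (\<Sum>e\<in>dset deg ?N. \<Sum>p\<in>?LN. \<Sum>q\<in>?LN. f p * g q * (M x y e * D e p q))"
    unfolding dual_comult_def prod.case
  proof (rule sum.cong[OF refl])
    fix e assume "e \<in> dset deg ?N"
    then have "conv deg D f g e = (\<Sum>p\<in>?LN. \<Sum>q\<in>?LN. D e p q * f p * g q)"
      by (intro conv_eq_sum_superset finite_lowset) auto
    then show "M x y e * conv deg D f g e
        = (\<Sum>p\<in>?LN. \<Sum>q\<in>?LN. f p * g q * (M x y e * D e p q))"
      by (simp add: sum_distrib_left mult_ac)
  qed
  also have "\<dots> = (\<Sum>p\<in>?LN. \<Sum>q\<in>?LN. f p * g q * (\<Sum>e\<in>dset deg ?N. M x y e * D e p q))"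
    by (subst sum_rotate3) (simp add: sum_distrib_left)
  also have "\<dots> = (\<Sum>p\<in>?LN. \<Sum>q\<in>?LN. \<Sum>b1\<in>?Lx. \<Sum>b2\<in>?Lx. \<Sum>c1\<in>?Ly. \<Sum>c2\<in>?Ly.
      D x b1 b2 * D y c1 c2 * (M b1 c1 p * f p) * (M b2 c2 q * g q))"
    by (simp only: bialgebra_compat) (simp add: sum_distrib_left mult_ac)
  also have "\<dots> = (\<Sum>b1\<in>?Lx. \<Sum>b2\<in>?Lx. \<Sum>c1\<in>?Ly. \<Sum>c2\<in>?Ly. \<Sum>p\<in>?LN. \<Sum>q\<in>?LN.
      D x b1 b2 * D y c1 c2 * (M b1 c1 p * f p) * (M b2 c2 q * g q))"
    by (rule sum_move_two_inside)
  also have "\<dots> = (\<Sum>b1\<in>?Lx. \<Sum>b2\<in>?Lx. \<Sum>c1\<in>?Ly. \<Sum>c2\<in>?Ly.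
      D x b1 b2 * D y c1 c2 * dual_comult deg M f (b1, c1) * dual_comult deg M g (b2, c2))"
  proof (intro sum.cong refl)
    fix b1 b2 c1 c2 assume "b1 \<in> ?Lx" "b2 \<in> ?Lx" "c1 \<in> ?Ly" "c2 \<in> ?Ly"
    then have "deg b1 + deg c1 \<le> ?N" "deg b2 + deg c2 \<le> ?N" by auto
    then show "(\<Sum>p\<in>?LN. \<Sum>q\<in>?LN. D x b1 b2 * D y c1 c2 * (M b1 c1 p * f p) * (M b2 c2 q * g q))
        = D x b1 b2 * D y c1 c2 * dual_comult deg M f (b1, c1) * dual_comult deg M g (b2, c2)"
      by (simp add: dual_comult_eq_sum_lowset sum_distrib_left sum_distrib_right mult_ac)
  qed
  also have "\<dots> = tensor_conv (dual_comult deg M f) (dual_comult deg M g) (x, y)"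
    by (simp add: tensor_conv_def)
  finally show "dual_comult deg M (conv deg D f g) (x, y)
      = tensor_conv (dual_comult deg M f) (dual_comult deg M g) (x, y)" .
qed

lemma tensor_conv_tprod_tspan_ideal:
  assumes I: "dual_ideal deg D I"
    and xy: "(x \<in> I \<and> y \<in> Hset) \<or> (x \<in> Hset \<and> y \<in> I)" and ab: "a \<in> Hset" "b \<in> Hset"
  shows "tensor_conv (tprod x y) (tprod a b) \<in> tspan_ideal I \<and> tensor_conv (tprod a b) (tprod x y) \<in> tspan_ideal I"
  using xy
proof
  assume "x \<in> I \<and> y \<in> Hset"
  then show ?thesis
    using I ab unfolding tensor_conv_tprod dual_ideal_def
    by (simp add: tprod_in_tspan_ideal_left conv_Hset)
next
  assume "x \<in> Hset \<and> y \<in> I"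
  then show ?thesis
    using I ab unfolding tensor_conv_tprod dual_ideal_def
    by (simp add: tprod_in_tspan_ideal_right conv_Hset)
qed

lemma tensor_conv_tspan_ideal:
  assumes I: "dual_ideal deg D I" and X: "X \<in> tspan_ideal I" and Y: "Y \<in> tspan Hset Hset"
  shows "tensor_conv X Y \<in> tspan_ideal I \<and> tensor_conv Y X \<in> tspan_ideal I"
proof -
  define G where "G = {tprod x y | x y. x \<in> I \<and> y \<in> Hset} \<union> {tprod x y | x y. x \<in> Hset \<and> y \<in> I}"
  have T: "subsp (tspan_ideal I)" unfolding tspan_ideal_def by (rule subsp_lspan)
  have X': "X \<in> lspan G" using X by (simp add: tspan_ideal_def G_def)
  have Y': "Y \<in> lspan {tprod a b | a b. a \<in> Hset \<and> b \<in> Hset}" using Y by (simp add: tspan_def)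
  have gen: "tensor_conv Z (tprod a b) \<in> tspan_ideal I \<and> tensor_conv (tprod a b) Z \<in> tspan_ideal I"
    if "Z \<in> G" "a \<in> Hset" "b \<in> Hset" for Z a b
    using that tensor_conv_tprod_tspan_ideal[OF I] unfolding G_def by blast
  have gens: "tensor_conv X Z \<in> tspan_ideal I \<and> tensor_conv Z X \<in> tspan_ideal I"
    if gen_Z: "Z \<in> {tprod a b | a b. a \<in> Hset \<and> b \<in> Hset}" for Z
  proof -
    obtain a b where Z: "Z = tprod a b" "a \<in> Hset" "b \<in> Hset" using gen_Z by blast
    show ?thesis
      unfolding Z(1)
      by (intro conjI linear_fun_lspan_subset[OF linear_fun_tensor_conv_left T _ X']
          linear_fun_lspan_subset[OF linear_fun_tensor_conv_right T _ X']) (use gen Z(2,3) in blast)+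
  qed
  show ?thesis
    by (intro conjI linear_fun_lspan_subset[OF linear_fun_tensor_conv_right T _ Y']
        linear_fun_lspan_subset[OF linear_fun_tensor_conv_left T _ Y']) (use gens in blast)+
qed

lemma dual_comult_conv_tspan_ideal:
  assumes "dual_ideal deg D I" "dual_comult deg M f \<in> tspan_ideal I" "g \<in> Hset"
  shows "dual_comult deg M (conv deg D f g) \<in> tspan_ideal I
    \<and> dual_comult deg M (conv deg D g f) \<in> tspan_ideal I"
  using tensor_conv_tspan_ideal[OF assms(1,2) Hset_in_tspan_Hset[OF dual_comult_Hset[OF assms(3)]]]
  by (simp add: dual_comult_conv)

end

context gc_hopf
begin

lemma dual_antip_Hset:
  assumes "f \<in> Hset"
  shows "dual_antip deg A f \<in> Hset"
proof (rule Hset_if_deg_bounded[of _ "top_deg f"])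
  fix b assume "dual_antip deg A f b \<noteq> 0"
  then obtain d where "deg d = deg b" "f d \<noteq> 0"
    unfolding dual_antip_def by (auto elim: sum.not_neutral_contains_not_neutral)
  then show "deg b \<le> top_deg f" using deg_le_top_deg[OF assms, of d] by simp
qed

lemma linear_fun_dual_antip: "linear_fun (dual_antip deg A)"
  by (rule linear_funI) (simp_all add: dual_antip_def fun_eq_iff sum.distrib sum_distrib_left algebra_simps)

text \<open>The map \<open>m \<circ> (S\<^sup>* \<otimes> id)\<close> from \<open>H\<^sup>* \<otimes> H\<^sup>*\<close> to \<open>H\<^sup>*\<close>.\<close>

definition antip_mult :: "('b \<times> 'b \<Rightarrow> 'k) \<Rightarrow> 'b \<Rightarrow> 'k" where
  "antip_mult X = (\<lambda>b. \<Sum>c\<in>lowset deg (deg b). \<Sum>d\<in>lowset deg (deg b).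
      D b c d * (\<Sum>e\<in>dset deg (deg c). A c e * X (e, d)))"

lemma antip_mult_tprod: "antip_mult (tprod x y) = conv deg D (dual_antip deg A x) y"
  by (simp add: fun_eq_iff antip_mult_def conv_def dual_antip_def tprod_def
      sum_distrib_left sum_distrib_right mult_ac)

lemma linear_fun_antip_mult: "linear_fun antip_mult"
  by (rule linear_funI) (simp_all add: antip_mult_def fun_eq_iff sum.distrib sum_distrib_left algebra_simps)

lemma antip_mult_dual_comult: "antip_mult (dual_comult deg M f) = (\<lambda>b. if b = u then f u else 0)"
proof
  fix b
  let ?L = "lowset deg (deg b)" and ?G = "dset deg (deg b)"
  let ?F = "\<lambda>c d e g. f g * (D b c d * A c e * M e d g)"
  have "antip_mult (dual_comult deg M f) b
      = (\<Sum>c\<in>?L. \<Sum>d\<in>?L. \<Sum>e\<in>dset deg (deg c). \<Sum>g\<in>dset deg (deg e + deg d). ?F c d e g)"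
    by (simp add: antip_mult_def dual_comult_def sum_distrib_left mult_ac)
  also have "\<dots> = (\<Sum>c\<in>?L. \<Sum>d\<in>?L. \<Sum>e\<in>dset deg (deg c). \<Sum>g\<in>?G. ?F c d e g)"
  proof (rule sum.cong[OF refl], rule sum.cong[OF refl], rule sum.cong[OF refl])
    fix c d e assume "e \<in> dset deg (deg c)"
    then show "(\<Sum>g\<in>dset deg (deg e + deg d). ?F c d e g) = (\<Sum>g\<in>?G. ?F c d e g)"
      using D_nonzero_deg[of b c d] by (cases "D b c d = 0") auto
  qed
  also have "\<dots> = (\<Sum>c\<in>?L. \<Sum>g\<in>?G. \<Sum>d\<in>?L. \<Sum>e\<in>dset deg (deg c). ?F c d e g)"
    by (rule sum.cong[OF refl], rule sum_rotate3[symmetric])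
  also have "\<dots> = (\<Sum>g\<in>?G. f g * (\<Sum>c\<in>?L. \<Sum>d\<in>?L. \<Sum>e\<in>dset deg (deg c). D b c d * A c e * M e d g))"
    by (subst sum.swap) (simp add: sum_distrib_left)
  also have "\<dots> = (\<Sum>g\<in>?G. f g * (eps b * (if g = u then 1 else 0)))"
    by (simp only: antipode_left)
  also have "\<dots> = (if b = u then f u else 0)"
    by (cases "b = u") (simp_all add: eps_eq_indicator dset_0)
  finally show "antip_mult (dual_comult deg M f) b = (if b = u then f u else 0)" .
qed

definition trunc :: "nat \<Rightarrow> ('b \<Rightarrow> 'k) \<Rightarrow> ('b \<Rightarrow> 'k)" where
  "trunc n f = (\<lambda>b. if deg b < n then f b else 0)"

definition trunc_left :: "nat \<Rightarrow> ('b \<times> 'b \<Rightarrow> 'k) \<Rightarrow> ('b \<times> 'b \<Rightarrow> 'k)" where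
  "trunc_left n X = (\<lambda>(b, c). if deg b < n then X (b, c) else 0)"

lemma trunc_eq_sum_comp: "trunc n f = (\<Sum>m<n. comp deg m f)"
  by (simp add: fun_eq_iff trunc_def sum_fun_apply comp_def)

lemma trunc_left_tprod: "trunc_left n (tprod x y) = tprod (trunc n x) y"
  by (simp add: fun_eq_iff trunc_left_def tprod_def trunc_def)

lemma linear_fun_trunc_left: "linear_fun (trunc_left n)"
  by (rule linear_funI) (simp_all add: trunc_left_def fun_eq_iff)

lemma dual_comult_homogeneous:
  assumes hom: "\<And>b. f b \<noteq> 0 \<Longrightarrow> deg b = n"
  shows "dual_comult deg M f = trunc_left n (dual_comult deg M f) + tprod f (unitv u)"
proof (rule ext, clarify)
  fix b c
  consider "deg b < n" | "\<not> deg b < n" "c = u" | "\<not> deg b < n" "c \<noteq> u" by blast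
  then show "dual_comult deg M f (b, c) = (trunc_left n (dual_comult deg M f) + tprod f (unitv u)) (b, c)"
  proof cases
    case 1
    then show ?thesis using hom[of b] by (auto simp: trunc_left_def tprod_def)
  next
    case 2
    have "dual_comult deg M f (b, u) = f b"
      unfolding dual_comult_def prod.case
      by (subst sum_eq_single[where a = b]) (auto simp: finite_dset M_unit_right)
    then show ?thesis using 2 by (simp add: trunc_left_def tprod_def unitv_def)
  next
    case 3
    then have "deg b + deg c \<noteq> n" using deg_eq_0_iff[of c] by simp
    then have "dual_comult deg M f (b, c) = 0"
      unfolding dual_comult_def prod.case using hom by (auto intro!: sum.neutral)
    then show ?thesis using 3 by (simp add: trunc_left_def tprod_def unitv_def)
  qed
qed

text \<open>The antipode recursion, obtained from \<open>m (S\<^sup>* \<otimes> id) \<Delta>\<^sup>* f = f(1) 1 = 0\<close>: it expresses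
  \<open>S\<^sup>* f\<close> through \<open>S\<^sup>*\<close> of left tensor factors of lower degree.\<close>

lemma dual_antip_homogeneous:
  assumes hom: "\<And>b. f b \<noteq> 0 \<Longrightarrow> deg b = n" and fu: "f u = 0"
  shows "dual_antip deg A f = - antip_mult (trunc_left n (dual_comult deg M f))"
proof -
  have "0 = antip_mult (dual_comult deg M f)"
    by (simp add: fun_eq_iff antip_mult_dual_comult fu)
  also have "\<dots> = antip_mult (trunc_left n (dual_comult deg M f)) + antip_mult (tprod f (unitv u))"
  proof -
    have "dual_comult deg M f = trunc_left n (dual_comult deg M f) + tprod f (unitv u)"
      by (rule dual_comult_homogeneous) (rule hom)
    from arg_cong[of _ _ antip_mult, OF this] show ?thesis
      by (simp only: linear_fun_add[OF linear_fun_antip_mult])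
  qed
  also have "\<dots> = antip_mult (trunc_left n (dual_comult deg M f)) + dual_antip deg A f"
    by (simp add: antip_mult_tprod conv_unit_right)
  finally show ?thesis by (simp add: eq_neg_iff_add_eq_0 add.commute)
qed

lemma trunc_in_graded_subsp:
  assumes "subsp I" "graded_subsp deg I" "f \<in> I"
  shows "trunc n f \<in> I"
  unfolding trunc_eq_sum_comp
  by (rule subsp_sum[OF assms(1)]) (use assms(2,3) in \<open>simp add: graded_subsp_def\<close>)

lemma antip_mult_trunc_left_tspan_ideal:
  assumes I: "dual_ideal deg D I" "graded_subsp deg I"
    and IH: "\<And>g. g \<in> I \<Longrightarrow> \<forall>b. g b \<noteq> 0 \<longrightarrow> deg b < n \<Longrightarrow> dual_antip deg A g \<in> I"
    and X: "X \<in> tspan_ideal I"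
  shows "antip_mult (trunc_left n X) \<in> I"
proof -
  have sI: "subsp I" and cI: "\<And>f g. f \<in> I \<Longrightarrow> g \<in> Hset \<Longrightarrow> conv deg D f g \<in> I \<and> conv deg D g f \<in> I"
    using I(1) by (auto simp: dual_ideal_def)
  have gen: "antip_mult (trunc_left n Z) \<in> I"
    if gen_Z: "Z \<in> {tprod x y | x y. x \<in> I \<and> y \<in> Hset} \<union> {tprod x y | x y. x \<in> Hset \<and> y \<in> I}"
    for Z
  proof -
    obtain x y where Z: "Z = tprod x y" and xy: "(x \<in> I \<and> y \<in> Hset) \<or> (x \<in> Hset \<and> y \<in> I)"
      using gen_Z by blast
    have "conv deg D (dual_antip deg A (trunc n x)) y \<in> I"
      using xy
    proof
      assume xy: "x \<in> I \<and> y \<in> Hset"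
      have "dual_antip deg A (trunc n x) \<in> I"
        by (rule IH) (use trunc_in_graded_subsp[OF sI I(2)] xy in \<open>auto simp: trunc_def\<close>)
      then show ?thesis using xy cI by blast
    next
      assume xy: "x \<in> Hset \<and> y \<in> I"
      have "trunc n x \<in> Hset" unfolding trunc_eq_sum_comp by (rule subsp_sum[OF subsp_Hset comp_Hset])
      then show ?thesis using xy cI dual_antip_Hset by blast
    qed
    then show ?thesis by (simp add: Z trunc_left_tprod antip_mult_tprod)
  qed
  show ?thesis
    by (rule linear_fun_lspan_subset[OF linear_fun_compose[OF linear_fun_antip_mult linear_fun_trunc_left]
          sI gen X[unfolded tspan_ideal_def]])
qed

lemma dual_antip_below_in_ideal:
  assumes I: "dual_ideal deg D I" "graded_subsp deg I"
    and counit: "\<And>f. f \<in> I \<Longrightarrow> f u = 0"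
    and comult: "\<And>f. f \<in> I \<Longrightarrow> dual_comult deg M f \<in> tspan_ideal I"
  shows "g \<in> I \<Longrightarrow> \<forall>b. g b \<noteq> 0 \<longrightarrow> deg b < n \<Longrightarrow> dual_antip deg A g \<in> I"
proof (induction n arbitrary: g)
  case 0
  then have "g = 0" by (auto simp: fun_eq_iff)
  then have "dual_antip deg A g = 0" by (simp only: linear_fun_zero[OF linear_fun_dual_antip])
  then show ?case using I(1) subsp_zero unfolding dual_ideal_def by metis
next
  case (Suc n)
  have sI: "subsp I" using I(1) by (simp add: dual_ideal_def)
  have top: "comp deg n g \<in> I" using Suc.prems(1) I(2) by (simp add: graded_subsp_def)
  have split: "g = comp deg n g + trunc n g"
    using Suc.prems(2) by (force simp: fun_eq_iff comp_def trunc_def)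
  have "dual_antip deg A (trunc n g) \<in> I"
    by (rule Suc.IH) (use trunc_in_graded_subsp[OF sI I(2) Suc.prems(1)] in \<open>auto simp: trunc_def\<close>)
  moreover have "dual_antip deg A (comp deg n g) \<in> I"
  proof -
    have "dual_antip deg A (comp deg n g) = - antip_mult (trunc_left n (dual_comult deg M (comp deg n g)))"
      by (rule dual_antip_homogeneous) (use counit[OF top] in \<open>auto simp: comp_def split: if_splits\<close>)
    then show ?thesis
      using antip_mult_trunc_left_tspan_ideal[OF I Suc.IH comult[OF top]] by (simp add: subsp_uminus[OF sI])
  qed
  ultimately show ?case
    by (subst split) (simp add: linear_fun_add[OF linear_fun_dual_antip] subsp_add[OF sI])
qed

lemma dual_antip_in_ideal:
  assumes "dual_ideal deg D I" "graded_subsp deg I"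
    and "\<And>f. f \<in> I \<Longrightarrow> f u = 0" "\<And>f. f \<in> I \<Longrightarrow> dual_comult deg M f \<in> tspan_ideal I"
    and f: "f \<in> I"
  shows "dual_antip deg A f \<in> I"
proof -
  have "f \<in> Hset" using assms(1) f by (auto simp: dual_ideal_def)
  then have "\<forall>b. f b \<noteq> 0 \<longrightarrow> deg b < Suc (top_deg f)"
    using deg_le_top_deg by (simp add: le_imp_less_Suc)
  then show ?thesis
    by (intro dual_antip_below_in_ideal[where I = I and n = "Suc (top_deg f)"]) (use assms in auto)
qed

end

section \<open>Ideals of the graded dual generated by a set\<close>

definition dual_ideal_hull ::
  "('b \<Rightarrow> nat) \<Rightarrow> ('b \<Rightarrow> 'b \<Rightarrow> 'b \<Rightarrow> 'k::field) \<Rightarrow> ('b \<Rightarrow> 'k) set \<Rightarrow> ('b \<Rightarrow> 'k) set" where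
  "dual_ideal_hull deg D G = \<Inter>{I. dual_ideal deg D I \<and> G \<subseteq> I}"

lemma dual_ideal_hull_minimal: "dual_ideal deg D J \<Longrightarrow> G \<subseteq> J \<Longrightarrow> dual_ideal_hull deg D G \<subseteq> J"
  unfolding dual_ideal_hull_def by blast

lemma dual_ideal_hull_base: "G \<subseteq> dual_ideal_hull deg D G"
  unfolding dual_ideal_hull_def by blast

lemma dual_ideal_Inter:
  assumes "\<And>I. I \<in> \<I> \<Longrightarrow> dual_ideal deg D I" "\<I> \<noteq> {}"
  shows "dual_ideal deg D (\<Inter>\<I>)"
  using assms unfolding dual_ideal_def subsp_def by blast

context gc_hopf
begin

lemma dual_ideal_dual_ideal_hull: "G \<subseteq> Hset \<Longrightarrow> dual_ideal deg D (dual_ideal_hull deg D G)"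
  unfolding dual_ideal_hull_def using dual_ideal_Hset by (intro dual_ideal_Inter) auto

lemma dual_ideal_hull_induct [consumes 2, case_names base zero add scale conv]:
  assumes f: "f \<in> dual_ideal_hull deg D G" and G: "G \<subseteq> Hset"
    and base: "\<And>g. g \<in> G \<Longrightarrow> P g"
    and zero: "P 0"
    and add: "\<And>f g. f \<in> dual_ideal_hull deg D G \<Longrightarrow> g \<in> dual_ideal_hull deg D G \<Longrightarrow>
      P f \<Longrightarrow> P g \<Longrightarrow> P (f + g)"
    and scale: "\<And>c f. f \<in> dual_ideal_hull deg D G \<Longrightarrow> P f \<Longrightarrow> P (\<lambda>p. c * f p)"
    and conv: "\<And>f g. f \<in> dual_ideal_hull deg D G \<Longrightarrow> P f \<Longrightarrow> g \<in> Hset \<Longrightarrow>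
      P (conv deg D f g) \<and> P (conv deg D g f)"
  shows "P f"
proof -
  let ?H = "dual_ideal_hull deg D G"
  have H: "dual_ideal deg D ?H" by (rule dual_ideal_dual_ideal_hull[OF G])
  have "dual_ideal deg D {f \<in> ?H. P f}"
    using H zero add scale conv unfolding dual_ideal_def subsp_def by auto
  moreover have "G \<subseteq> {f \<in> ?H. P f}" using base dual_ideal_hull_base by blast
  ultimately have "?H \<subseteq> {f \<in> ?H. P f}" by (rule dual_ideal_hull_minimal)
  then show ?thesis using f by blast
qed

lemma graded_subsp_dual_ideal_hull:
  assumes G: "G \<subseteq> Hset" and comp_G: "\<forall>g\<in>G. \<forall>n. comp deg n g \<in> dual_ideal_hull deg D G"
  shows "graded_subsp deg (dual_ideal_hull deg D G)"
proof -
  let ?H = "dual_ideal_hull deg D G"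
  have H: "subsp ?H" "\<And>f g. f \<in> ?H \<Longrightarrow> g \<in> Hset \<Longrightarrow> conv deg D f g \<in> ?H \<and> conv deg D g f \<in> ?H"
    using dual_ideal_dual_ideal_hull[OF G] by (auto simp: dual_ideal_def)
  have "\<forall>n. comp deg n f \<in> ?H" if "f \<in> ?H" for f
    using that G
  proof (induction rule: dual_ideal_hull_induct)
    case zero
    show ?case using subsp_zero[OF H(1)] by (simp only: linear_fun_zero[OF linear_fun_comp]) blast
  next
    case (add f g)
    then show ?case using subsp_add[OF H(1)] by (simp only: linear_fun_add[OF linear_fun_comp]) blast
  next
    case (scale c f)
    then show ?case using subsp_scale[OF H(1)] by (simp add: linear_fun_scale[OF linear_fun_comp])
  next
    case (conv f g)
    then have "conv deg D (comp deg i f) (comp deg j g) \<in> ?H \<and> conv deg D (comp deg j g) (comp deg i f) \<in> ?H"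
      for i j
      using H(2) comp_Hset by blast
    then show ?case unfolding comp_conv by (blast intro: subsp_sum[OF H(1)])
  qed (use comp_G in blast)
  then show ?thesis by (simp add: graded_subsp_def)
qed

lemma dual_ideal_hull_at_u:
  assumes "G \<subseteq> Hset" "\<forall>g\<in>G. g u = 0" "f \<in> dual_ideal_hull deg D G"
  shows "f u = 0"
  using assms(3,1)
  by (induction rule: dual_ideal_hull_induct) (use assms(2) in \<open>simp_all add: conv_at_u\<close>)

lemma dual_comult_dual_ideal_hull:
  assumes G: "G \<subseteq> Hset"
    and comult_G: "\<forall>g\<in>G. dual_comult deg M g \<in> tspan_ideal (dual_ideal_hull deg D G)"
    and f: "f \<in> dual_ideal_hull deg D G"
  shows "dual_comult deg M f \<in> tspan_ideal (dual_ideal_hull deg D G)"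
proof -
  have T: "subsp (tspan_ideal (dual_ideal_hull deg D G))"
    unfolding tspan_ideal_def by (rule subsp_lspan)
  show ?thesis
    using f G
  proof (induction rule: dual_ideal_hull_induct)
    case zero
    show ?case by (simp only: linear_fun_zero[OF linear_fun_dual_comult] subsp_zero[OF T])
  next
    case (add f g)
    then show ?case using subsp_add[OF T] by (simp only: linear_fun_add[OF linear_fun_dual_comult])
  next
    case (scale c f)
    then show ?case by (simp add: linear_fun_scale[OF linear_fun_dual_comult] subsp_scale[OF T])
  next
    case (conv f g)
    then show ?case using dual_comult_conv_tspan_ideal[OF dual_ideal_dual_ideal_hull[OF G]] by blast
  qed (use comult_G in blast)
qed

lemma graded_hopf_ideal_dual_hull:
  assumes G: "G \<subseteq> Hset"
    and comp_G: "\<forall>g\<in>G. \<forall>n. comp deg n g \<in> dual_ideal_hull deg D G"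
    and counit_G: "\<forall>g\<in>G. g u = 0"
    and comult_G: "\<forall>g\<in>G. dual_comult deg M g \<in> tspan_ideal (dual_ideal_hull deg D G)"
  shows "graded_hopf_ideal_dual deg u M D A (dual_ideal_hull deg D G)"
proof -
  have ideal: "dual_ideal deg D (dual_ideal_hull deg D G)"
    and graded: "graded_subsp deg (dual_ideal_hull deg D G)"
    and counit: "\<And>f. f \<in> dual_ideal_hull deg D G \<Longrightarrow> f u = 0"
    and comult: "\<And>f. f \<in> dual_ideal_hull deg D G \<Longrightarrow> dual_comult deg M f \<in> tspan_ideal (dual_ideal_hull deg D G)"
    using dual_ideal_dual_ideal_hull[OF G] graded_subsp_dual_ideal_hull[OF G comp_G]
      dual_ideal_hull_at_u[OF G counit_G]
      dual_comult_dual_ideal_hull[OF G comult_G] by blast+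
  moreover have "dual_antip deg A f \<in> dual_ideal_hull deg D G" if "f \<in> dual_ideal_hull deg D G" for f
    by (rule dual_antip_in_ideal[OF ideal graded]) (use counit comult that in auto)
  ultimately show ?thesis by (simp add: graded_hopf_ideal_dual_def tspan_ideal_def)
qed

end

section \<open>Two-sided products with dual basis vectors\<close>

lemma Hset_eq_sum_unitv:
  assumes "g \<in> Hset"
  shows "g = (\<Sum>r\<in>supp g. (\<lambda>w. g r * unitv r w))"
proof
  fix w
  have "(\<Sum>r\<in>supp g. (\<lambda>w. g r * unitv r w)) w = (\<Sum>r\<in>supp g. if r = w then g r else 0)"
    unfolding sum_fun_apply by (rule sum.cong) (auto simp: unitv_def)
  also have "\<dots> = g w" using assms by (simp add: Hset_def supp_def)
  finally show "g w = (\<Sum>r\<in>supp g. (\<lambda>w. g r * unitv r w)) w" by simp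
qed

lemma Hset_subset_lspan_unitv: "(Hset :: ('a \<Rightarrow> 'k::field) set) \<subseteq> lspan (range unitv)"
proof
  fix g :: "'a \<Rightarrow> 'k" assume g: "g \<in> Hset"
  show "g \<in> lspan (range unitv)"
    by (subst Hset_eq_sum_unitv[OF g])
      (intro subsp_sum[OF subsp_lspan] subsp_scale[OF subsp_lspan] lspan_base rangeI)
qed

context gc_hopf
begin

lemma conv_unitv_sandwich:
  "conv deg D (conv deg D (unitv p) x) (unitv q) b
     = (\<Sum>e\<in>lowset deg (deg b). \<Sum>c\<in>lowset deg (deg b). D b e q * D e p c * x c)"
proof -
  let ?L = "lowset deg (deg b)"
  have right: "(\<Sum>d\<in>?L. D b e d * y * unitv q d) = D b e q * y" for e y
  proof (cases "deg q \<le> deg b")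
    case True
    then show ?thesis by (subst sum_eq_single[where a = q]) (auto simp: finite_lowset unitv_def)
  next
    case False
    then show ?thesis using D_eq_0_right[of b q e] by (auto simp: unitv_def intro!: sum.neutral)
  qed
  have left: "conv deg D (unitv p) x e = (\<Sum>c\<in>?L. D e p c * x c)" if "e \<in> ?L" for e
  proof -
    have "conv deg D (unitv p) x e = (\<Sum>c'\<in>?L. \<Sum>c\<in>?L. D e c' c * unitv p c' * x c)"
      by (rule conv_eq_sum_superset) (use that in \<open>auto simp: finite_lowset\<close>)
    also have "\<dots> = (\<Sum>c\<in>?L. D e p c * x c)"
    proof (cases "deg p \<le> deg b")
      case True
      then show ?thesis by (subst sum_eq_single[where a = p]) (auto simp: finite_lowset unitv_def)
    next
      case False
      then have "D e p c = 0" for c using that D_eq_0_left[of e p c] by simp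
      then show ?thesis using False by (auto simp: unitv_def intro!: sum.neutral)
    qed
    finally show ?thesis .
  qed
  have "conv deg D (conv deg D (unitv p) x) (unitv q) b
      = (\<Sum>e\<in>?L. D b e q * conv deg D (unitv p) x e)"
    unfolding conv_def by (rule sum.cong[OF refl]) (rule right)
  also have "\<dots> = (\<Sum>e\<in>?L. \<Sum>c\<in>?L. D b e q * D e p c * x c)"
    by (rule sum.cong[OF refl]) (simp add: left sum_distrib_left mult_ac)
  finally show ?thesis .
qed

lemma pair_unitv_sandwich:
  "pair (conv deg D (conv deg D (unitv p) x) (unitv q)) h = delta2_mid deg D x h (p, q)"
  unfolding pair_def delta2_mid_def by (simp add: conv_unitv_sandwich mult.commute)

lemma pair_sandwich_eq_0:
  assumes a: "a \<in> Hset" and b: "b \<in> Hset" and mid: "\<And>p q. delta2_mid deg D x h (p, q) = 0"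
  shows "pair (conv deg D (conv deg D a x) b) h = 0"
proof -
  have "conv deg D (conv deg D (unitv p) x) b \<in> {f. pair f h = 0}" for p
    by (rule linear_fun_lspan_subset[OF linear_fun_conv_right subsp_pair_left_zero _
          subsetD[OF Hset_subset_lspan_unitv b]])
      (auto simp: pair_unitv_sandwich mid)
  then have "conv deg D (conv deg D a x) b \<in> {f. pair f h = 0}"
    by (intro linear_fun_lspan_subset[OF linear_fun_compose[OF linear_fun_conv_left linear_fun_conv_left]
          subsp_pair_left_zero _ subsetD[OF Hset_subset_lspan_unitv a]]) auto
  then show ?thesis by simp
qed

lemma dual_ideal_sandwich_annihilator:
  "dual_ideal deg D {f \<in> Hset. \<forall>a\<in>Hset. \<forall>b\<in>Hset. pair (conv deg D (conv deg D a f) b) h = 0}"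
  (is "dual_ideal deg D ?J")
  unfolding dual_ideal_def
proof (intro conjI ballI)
  have "subsp {f. pair (conv deg D (conv deg D a f) b) h = 0}" for a b
    by (rule subsp_vimage[OF linear_fun_compose[OF linear_fun_conv_left linear_fun_conv_right]
          subsp_pair_left_zero, simplified])
  then show "subsp ?J"
    unfolding subsp_def using subsp_Hset by (simp add: subsp_def) blast
next
  fix f g :: "'b \<Rightarrow> 'k" assume f: "f \<in> ?J" and g: "g \<in> Hset"
  show "conv deg D f g \<in> ?J"
    using f g by (simp add: conv_Hset conv_assoc)
  show "conv deg D g f \<in> ?J"
    using f g by (simp add: conv_Hset conv_assoc[symmetric])
qed blast

lemma delta2_mid_eq_0_if_deg_less:
  assumes hom: "\<And>b. h b \<noteq> 0 \<Longrightarrow> deg b = N" and less: "N < deg p + deg q"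
  shows "delta2_mid deg D x h (p, q) = 0"
  unfolding delta2_mid_def prod.case
proof (intro sum.neutral ballI)
  fix b assume "b \<in> supp h"
  then have "deg b = N" using hom by (simp add: supp_def)
  then have summand: "D b e q * D e p c * x c = 0" for e c
    using D_nonzero_deg[of b e q] D_nonzero_deg[of e p c] less by fastforce
  show "h b * (\<Sum>e\<in>lowset deg (deg b). \<Sum>c\<in>lowset deg (deg b). D b e q * D e p c * x c) = 0"
    by (simp only: summand sum.neutral_const mult_zero_right)
qed

end

section \<open>The ideal generated by two characters\<close>

locale gc_hopf_characters = gc_hopf deg u M D eps A
  for deg :: "'b \<Rightarrow> nat" and u :: 'b and M D :: "'b \<Rightarrow> 'b \<Rightarrow> 'b \<Rightarrow> 'k::field"
    and eps :: "'b \<Rightarrow> 'k" and A :: "'b \<Rightarrow> 'b \<Rightarrow> 'k" +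
  fixes phi psi :: "'b \<Rightarrow> 'k"
  assumes phi: "character deg u M phi" and psi: "character deg u M psi"
begin

definition char_diff :: "nat \<Rightarrow> 'b \<Rightarrow> 'k" where
  "char_diff n = comp deg n phi - comp deg n psi"

lemma Iset_eq_hull: "Iset deg D phi psi = dual_ideal_hull deg D (range char_diff)"
  unfolding Iset_def dual_ideal_hull_def char_diff_def by (simp add: image_subset_iff)

lemma char_diff_in_Iset: "char_diff n \<in> Iset deg D phi psi"
  unfolding Iset_eq_hull using dual_ideal_hull_base by blast

lemma char_diff_Hset: "char_diff n \<in> Hset"
  unfolding char_diff_def by (rule subsp_diff[OF subsp_Hset comp_Hset comp_Hset])

lemma comp_char_diff: "comp deg m (char_diff n) = (if m = n then char_diff n else 0)"
  by (simp add: char_diff_def fun_eq_iff comp_def)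

lemma char_diff_at_u: "char_diff n u = 0"
  using phi psi by (simp add: char_diff_def comp_def character_def)

text \<open>Characters are group-like in \<open>H\<^sup>*\<close>: \<open>\<Delta>\<^sup>* \<phi> = \<phi> \<otimes> \<phi>\<close>.\<close>

lemma dual_comult_char_diff:
  "dual_comult deg M (char_diff n) =
     (\<Sum>i\<le>n. tprod (char_diff i) (comp deg (n - i) phi) + tprod (comp deg i psi) (char_diff (n - i)))"
proof (rule ext, clarify)
  fix b c
  let ?v = "phi b * phi c - psi b * psi c"
  have "dual_comult deg M (char_diff n) (b, c) = (if deg b + deg c = n then ?v else 0)"
  proof -
    have "dual_comult deg M (char_diff n) (b, c) = (\<Sum>e\<in>dset deg (deg b + deg c).
        (if deg b + deg c = n then M b c e * phi e - M b c e * psi e else 0))"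
      unfolding dual_comult_def prod.case
      by (rule sum.cong[OF refl]) (auto simp: char_diff_def comp_def algebra_simps)
    also have "\<dots> = (if deg b + deg c = n then ?v else 0)"
      using phi psi by (simp add: sum_subtractf character_def)
    finally show ?thesis .
  qed
  moreover have "(\<Sum>i\<le>n. tprod (char_diff i) (comp deg (n - i) phi)
      + tprod (comp deg i psi) (char_diff (n - i))) (b, c)
      = (\<Sum>i\<le>n. if i = deg b \<and> deg c = n - i then ?v else 0)"
    unfolding sum_fun_apply by (rule sum.cong) (auto simp: char_diff_def comp_def tprod_def algebra_simps)
  moreover have "(\<Sum>i\<le>n. if i = deg b \<and> deg c = n - i then ?v else 0) = (if deg b + deg c = n then ?v else 0)"
  proof (cases "deg b + deg c = n")
    case True
    then show ?thesis by (subst sum_eq_single[where a = "deg b"]) auto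
  qed (auto intro!: sum.neutral)
  ultimately show "dual_comult deg M (char_diff n) (b, c) =
     (\<Sum>i\<le>n. tprod (char_diff i) (comp deg (n - i) phi) + tprod (comp deg i psi) (char_diff (n - i))) (b, c)"
    by simp
qed

lemma graded_hopf_ideal_Iset: "graded_hopf_ideal_dual deg u M D A (Iset deg D phi psi)"
  unfolding Iset_eq_hull
proof (rule graded_hopf_ideal_dual_hull)
  let ?H = "dual_ideal_hull deg D (range char_diff)"
  have base: "char_diff n \<in> ?H" for n
    using dual_ideal_hull_base by blast
  have H: "subsp ?H"
    using dual_ideal_dual_ideal_hull[of "range char_diff"] char_diff_Hset by (auto simp: dual_ideal_def)
  show "range char_diff \<subseteq> Hset" using char_diff_Hset by blast
  show "\<forall>g\<in>range char_diff. \<forall>n. comp deg n g \<in> ?H"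
    using base subsp_zero[OF H] by (auto simp: comp_char_diff)
  show "\<forall>g\<in>range char_diff. g u = 0"
    by (auto simp: char_diff_at_u)
  show "\<forall>g\<in>range char_diff. dual_comult deg M g \<in> tspan_ideal ?H"
  proof
    fix g assume "g \<in> range char_diff"
    then obtain n where g: "g = char_diff n" by blast
    have T: "subsp (tspan_ideal ?H)" unfolding tspan_ideal_def by (rule subsp_lspan)
    show "dual_comult deg M g \<in> tspan_ideal ?H"
      unfolding g dual_comult_char_diff
      by (intro subsp_sum[OF T] subsp_add[OF T] tprod_in_tspan_ideal_left tprod_in_tspan_ideal_right
          base comp_Hset)
  qed
qed

lemma pair_phi_eq_pair_psi_annihilator:
  assumes h: "h \<in> annihilator (Iset deg D phi psi)"
  shows "pair phi h = pair psi h"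
proof -
  have hH: "h \<in> Hset" using h by (simp add: annihilator_def)
  have "pair (phi - psi) h = pair (\<Sum>n\<le>top_deg h. char_diff n) h"
  proof (rule pair_cong_left)
    fix b assume "b \<in> supp h"
    then have "deg b \<le> top_deg h" using deg_le_top_deg[OF hH] by (simp add: supp_def)
    then show "(phi - psi) b = (\<Sum>n\<le>top_deg h. char_diff n) b"
      by (simp add: sum_fun_apply char_diff_def comp_def sum_subtractf)
  qed
  also have "\<dots> = 0"
    using h char_diff_in_Iset by (auto simp: pair_sum_left annihilator_def intro!: sum.neutral)
  finally show ?thesis by (simp add: pair_diff_left)
qed

lemma subcoalg_subset_annihilator:
  assumes C: "graded_subcoalg deg D C" and agree: "\<forall>h\<in>C. pair phi h = pair psi h"
  shows "C \<subseteq> annihilator (Iset deg D phi psi)"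
proof -
  have CH: "C \<subseteq> Hset" and graded: "graded_subsp deg C"
    and coalg: "\<And>x. x \<in> C \<Longrightarrow> hcomult D x \<in> tspan C C"
    using C by (auto simp: graded_subcoalg_def)
  have "pair (char_diff n) h = 0" if "h \<in> C" for n h
  proof -
    have "comp deg n h \<in> C" using graded that by (simp add: graded_subsp_def)
    then show ?thesis
      using agree subsetD[OF CH that] by (simp add: char_diff_def pair_diff_left pair_comp)
  qed
  then have "Iset deg D phi psi \<subseteq> {f \<in> Hset. \<forall>h\<in>C. pair f h = 0}"
    unfolding Iset_eq_hull
    by (intro dual_ideal_hull_minimal dual_ideal_coalg_annihilator[OF CH coalg])
      (auto simp: char_diff_Hset)
  then show ?thesis using CH by (auto simp: annihilator_def)
qed

lemma Sset_eq_annihilator: "Sset deg D phi psi = annihilator (Iset deg D phi psi)"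
  unfolding Sset_def
proof (rule Greatest_equality)
  show "graded_subcoalg deg D (annihilator (Iset deg D phi psi))
      \<and> (\<forall>h\<in>annihilator (Iset deg D phi psi). pair phi h = pair psi h)"
    using graded_subcoalg_annihilator graded_hopf_ideal_Iset pair_phi_eq_pair_psi_annihilator
    by (auto simp: graded_hopf_ideal_dual_def)
qed (use subcoalg_subset_annihilator in blast)

lemma delta2_mid_char_diff:
  assumes hom: "\<And>b. h b \<noteq> 0 \<Longrightarrow> deg b = N"
  shows "delta2_mid deg D (char_diff n) h (p, q) =
    (if n + deg p + deg q = N then delta2_mid deg D (\<lambda>c. phi c - psi c) h (p, q) else 0)"
proof -
  let ?P = "n + deg p + deg q = N"
  have summand: "D b e q * D e p c * char_diff n c = (if ?P then D b e q * D e p c * (phi c - psi c) else 0)"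
    if "deg b = N" for b e c
    using that D_nonzero_deg[of b e q] D_nonzero_deg[of e p c]
    by (cases "D b e q = 0 \<or> D e p c = 0") (auto simp: char_diff_def comp_def)
  have "delta2_mid deg D (char_diff n) h (p, q) = (\<Sum>b\<in>supp h. h b *
      (\<Sum>e\<in>lowset deg (deg b). \<Sum>c\<in>lowset deg (deg b). if ?P then D b e q * D e p c * (phi c - psi c) else 0))"
    unfolding delta2_mid_def prod.case
    by (intro sum.cong refl) (use hom in \<open>simp add: supp_def summand\<close>)
  also have "\<dots> = (if ?P then delta2_mid deg D (\<lambda>c. phi c - psi c) h (p, q) else 0)"
    by (simp add: delta2_mid_def)
  finally show ?thesis .
qed

lemma homogeneous_in_annihilator_iff:
  assumes h: "h \<in> Hset" and hom: "homogeneous deg h"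
  shows "h \<in> annihilator (Iset deg D phi psi) \<longleftrightarrow> delta2_mid deg D (\<lambda>c. phi c - psi c) h = 0"
proof -
  obtain N where N: "\<And>b. h b \<noteq> 0 \<Longrightarrow> deg b = N" using hom unfolding homogeneous_def by blast
  let ?I = "Iset deg D phi psi"
  have I: "dual_ideal deg D ?I" using graded_hopf_ideal_Iset by (simp add: graded_hopf_ideal_dual_def)
  show ?thesis
  proof
    assume ann: "h \<in> annihilator ?I"
    have "delta2_mid deg D (\<lambda>c. phi c - psi c) h (p, q) = 0" for p q
    proof (cases "deg p + deg q \<le> N")
      case True
      let ?n = "N - (deg p + deg q)"
      have "conv deg D (conv deg D (unitv p) (char_diff ?n)) (unitv q) \<in> ?I"
        using I char_diff_in_Iset unitv_Hset by (simp add: dual_ideal_def)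
      then have "pair (conv deg D (conv deg D (unitv p) (char_diff ?n)) (unitv q)) h = 0"
        using ann by (auto simp: annihilator_def)
      then have "delta2_mid deg D (char_diff ?n) h (p, q) = 0"
        by (simp add: pair_unitv_sandwich)
      then show ?thesis using True by (simp add: delta2_mid_char_diff[OF N])
    qed (simp add: delta2_mid_eq_0_if_deg_less[OF N])
    then show "delta2_mid deg D (\<lambda>c. phi c - psi c) h = 0" by (simp add: fun_eq_iff)
  next
    assume "delta2_mid deg D (\<lambda>c. phi c - psi c) h = 0"
    then have "delta2_mid deg D (char_diff n) h (p, q) = 0" for n p q
      by (simp add: delta2_mid_char_diff[OF N])
    then have "?I \<subseteq> {f \<in> Hset. \<forall>a\<in>Hset. \<forall>b\<in>Hset. pair (conv deg D (conv deg D a f) b) h = 0}"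
      unfolding Iset_eq_hull
      by (intro dual_ideal_hull_minimal dual_ideal_sandwich_annihilator)
        (auto simp: char_diff_Hset pair_sandwich_eq_0)
    then have "pair f h = 0" if "f \<in> ?I" for f
      using that unitv_Hset[of u] by (force simp: conv_unit_left conv_unit_right)
    then show "h \<in> annihilator ?I" using h by (simp add: annihilator_def)
  qed
qed

end

theorem theorem5p3:
  fixes deg :: "'b \<Rightarrow> nat" and u :: 'b
    and M D :: "'b \<Rightarrow> 'b \<Rightarrow> 'b \<Rightarrow> 'k::field" and eps :: "'b \<Rightarrow> 'k" and A :: "'b \<Rightarrow> 'b \<Rightarrow> 'k"
    and phi psi :: "'b \<Rightarrow> 'k"
  assumes "graded_connected_hopf deg u M D eps A"
    and "character deg u M phi" and "character deg u M psi"
  shows "Sset deg D phi psi = {h \<in> Hset. \<forall>f\<in>Iset deg D phi psi. pair f h = 0}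
    \<and> graded_hopf_ideal_dual deg u M D A (Iset deg D phi psi)
    \<and> graded_hopf_subalg deg u M D A (Sset deg D phi psi)
    \<and> (\<forall>h \<in> Hset. homogeneous deg h \<longrightarrow>
          (h \<in> Sset deg D phi psi \<longleftrightarrow> delta2_mid deg D (\<lambda>c. phi c - psi c) h = 0))"
proof -
  interpret gc_hopf_characters deg u M D eps A phi psi
    using assms by (simp add: gc_hopf_characters_def gc_hopf_def gc_hopf_characters_axioms_def)
  show ?thesis
    using Sset_eq_annihilator graded_hopf_ideal_Iset
      graded_hopf_subalg_annihilator[OF graded_hopf_ideal_Iset] homogeneous_in_annihilator_iff
    by (simp add: annihilator_def)
qed

end
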